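(* Consider an open quantum system on a finite-dimensional Hilbert space $\mathcal H$ with Hamiltonian $H$. Let $W_1,\dots,W_N$ be observables commuting with $H$, each positive semidefinite with smallest eigenvalue $0$, with $[W_\lambda,W_{\lambda'}]=0$ for $\lambda\neq\lambda'$. Let the coupling operators be $L_k=U_kW_k$, $k=1,\dots,N$, with $U_k$ unitary, and assume $[U_{k'},W_\lambda]=0$ whenever $k'\neq\lambda$. Suppose that for each $\lambda$ either $\mathcal G(W_\lambda)_{L_\lambda}\le-c_\lambda W_\lambda$ for some $c_\lambda>0$, or $\mathcal G(W_\lambda)_{L_\lambda}\le0$ and $\mathfrak D(W_\lambda)_{L_\lambda}\ge c_\lambda W_\lambda$ for some $c_\lambda>0$. Then $W=\sum_{\lambda=1}^NW_\lambda$ is asymptotically ground-state stable.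
   Context: The density state (positive semidefinite, trace one) evolves by $\dot\rho_t=-i[H,\rho_t]+\sum_{k=1}^N\big(L_k\rho_tL_k^\dagger-\tfrac12L_k^\dagger L_k\rho_t-\tfrac12\rho_tL_k^\dagger L_k\big)$. Single-channel generator component: $\mathcal G(X)_{L_k}=L_k^\dagger XL_k-\tfrac12L_k^\dagger L_kX-\tfrac12XL_k^\dagger L_k$; for $X$ commuting with $H$, $\frac{d}{dt}\operatorname{tr}(X\rho_t)=\operatorname{tr}(\sum_k\mathcal G(X)_{L_k}\rho_t)$. Single-channel dissipation functional for self-adjoint $X$: $\mathfrak D(X)_{L_k}=[L_k^\dagger,X][X,L_k]$. An observable $X$ with smallest eigenvalue $d$ is asymptotically ground-state stable if $\operatorname{tr}(X\rho_t)\to d$ as $t\to\infty$ for every initial density state. *)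

theory Defs
  imports "HOL-Analysis.Analysis"
begin

type_synonym 'n cmat = "complex^'n^'n"

definition cadj :: "'n::finite cmat \<Rightarrow> 'n cmat" where
  "cadj A = (\<chi> i j. cnj (A $ j $ i))"

definition mtrace :: "'n::finite cmat \<Rightarrow> complex" where
  "mtrace A = (\<Sum>i\<in>UNIV. A $ i $ i)"

definition mscale :: "complex \<Rightarrow> 'n::finite cmat \<Rightarrow> 'n cmat" (infixr "*\<^sub>m" 75) where
  "c *\<^sub>m A = (\<chi> i j. c * A $ i $ j)"

definition comm :: "'n::finite cmat \<Rightarrow> 'n cmat \<Rightarrow> 'n cmat" where
  "comm A B = A ** B - B ** A"

definition self_adjoint :: "'n::finite cmat \<Rightarrow> bool" where
  "self_adjoint A \<longleftrightarrow> cadj A = A"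

definition unitary :: "'n::finite cmat \<Rightarrow> bool" where
  "unitary U \<longleftrightarrow> U ** cadj U = mat 1 \<and> cadj U ** U = mat 1"

definition psd :: "'n::finite cmat \<Rightarrow> bool" where
  "psd A \<longleftrightarrow> self_adjoint A \<and>
     (\<forall>x::complex^'n. 0 \<le> Re (\<Sum>i\<in>UNIV. cnj (x $ i) * (A *v x) $ i))"

definition loewner_le :: "'n::finite cmat \<Rightarrow> 'n cmat \<Rightarrow> bool" where
  "loewner_le A B \<longleftrightarrow> psd (B - A)"

definition is_eigenvalue :: "'n::finite cmat \<Rightarrow> complex \<Rightarrow> bool" where
  "is_eigenvalue A \<mu> \<longleftrightarrow> (\<exists>v. v \<noteq> 0 \<and> A *v v = \<mu> *s v)"

text \<open>Smallest eigenvalue (meaningful for self-adjoint A, whose eigenvalues are real).\<close>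
definition smallest_eigenvalue :: "'n::finite cmat \<Rightarrow> real" where
  "smallest_eigenvalue A = Min (Re ` {\<mu>. is_eigenvalue A \<mu>})"

definition density_state :: "'n::finite cmat \<Rightarrow> bool" where
  "density_state \<rho> \<longleftrightarrow> psd \<rho> \<and> mtrace \<rho> = 1"

definition lindblad :: "'n::finite cmat \<Rightarrow> (nat \<Rightarrow> 'n cmat) \<Rightarrow> nat \<Rightarrow> 'n cmat \<Rightarrow> 'n cmat" where
  "lindblad H L N \<rho> = - (\<i> *\<^sub>m comm H \<rho>)
     + (\<Sum>k\<in>{1..N}. L k ** \<rho> ** cadj (L k)
          - (1/2) *\<^sub>m (cadj (L k) ** L k ** \<rho>) - (1/2) *\<^sub>m (\<rho> ** cadj (L k) ** L k))"

definition gen :: "'n::finite cmat \<Rightarrow> 'n cmat \<Rightarrow> 'n cmat" where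
  "gen L X = cadj L ** X ** L - (1/2) *\<^sub>m (cadj L ** L ** X) - (1/2) *\<^sub>m (X ** cadj L ** L)"

definition diss :: "'n::finite cmat \<Rightarrow> 'n cmat \<Rightarrow> 'n cmat" where
  "diss L X = comm (cadj L) X ** comm X L"

definition ags_stable :: "'n::finite cmat \<Rightarrow> (nat \<Rightarrow> 'n cmat) \<Rightarrow> nat \<Rightarrow> 'n cmat \<Rightarrow> bool" where
  "ags_stable H L N X \<longleftrightarrow>
     (\<forall>\<rho> :: real \<Rightarrow> 'n cmat.
        density_state (\<rho> 0) \<and>
        (\<forall>t\<ge>0. (\<rho> has_vector_derivative lindblad H L N (\<rho> t)) (at t within {0..}))
        \<longrightarrow> ((\<lambda>t. mtrace (X ** \<rho> t)) \<longlongrightarrow> complex_of_real (smallest_eigenvalue X)) at_top)"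

end

theory Submission
  imports Defs
begin

(*
  Each W_l is a Lyapunov function for its own channel. For k different from l, U_k and W_k commute
  with W_l, hence with W_l^2, so the generator of channel k vanishes on both; so does [H, .]. Hence
  d/dt tr(W_l rho_t) = tr(G rho_t) and d/dt tr(W_l^2 rho_t) = tr((W_l G + G W_l + D) rho_t), where
  G and D are the generator and the dissipation functional of channel l at W_l. In the first
  alternative tr(W_l rho_t) decays exponentially. In the second it is nonincreasing, and if it stayed
  above e > 0 the bounded quantity tr(W_l^2 rho_t) would grow linearly: D contributes at least c e,
  while by Cauchy-Schwarz the cross terms are bounded by the square root of the rate of decrease of
  tr(W_l rho_t). All of this needs rho_t to remain a density state, which is a Nagumo-type argument:
  the Lindblad vector field points into the cone of positive semidefinite matrices.
*)

section \<open>Matrix algebra\<close>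

lemma matrix_add_rdistrib: "((A::'n::finite cmat) + B) ** C = A ** C + B ** C"
  by (simp add: matrix_matrix_mult_def vec_eq_iff sum.distrib distrib_right)

lemma matrix_diff_ldistrib: "(A::'n::finite cmat) ** (B - C) = A ** B - A ** C"
  by (simp add: matrix_matrix_mult_def vec_eq_iff sum_subtractf right_diff_distrib)

lemma matrix_diff_rdistrib: "((A::'n::finite cmat) - B) ** C = A ** C - B ** C"
  by (simp add: matrix_matrix_mult_def vec_eq_iff sum_subtractf left_diff_distrib)

lemma matrix_mul_minus_left: "(- (A::'n::finite cmat)) ** B = - (A ** B)"
  by (simp add: matrix_matrix_mult_def vec_eq_iff sum_negf)

lemma matrix_mul_minus_right: "(A::'n::finite cmat) ** (- B) = - (A ** B)"
  by (simp add: matrix_matrix_mult_def vec_eq_iff sum_negf)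

lemma matrix_mul_sum_left: "(\<Sum>k\<in>S. f k) ** (B::'n::finite cmat) = (\<Sum>k\<in>S. (f k :: 'n cmat) ** B)"
  by (induction S rule: infinite_finite_induct) (auto simp: matrix_add_rdistrib)

lemma matrix_mul_sum_right: "(B::'n::finite cmat) ** (\<Sum>k\<in>S. f k) = (\<Sum>k\<in>S. B ** (f k :: 'n cmat))"
  by (induction S rule: infinite_finite_induct) (auto simp: matrix_add_ldistrib)

lemma mscale_nth [simp]: "(c *\<^sub>m A) $ i $ j = c * A $ i $ j"
  by (simp add: mscale_def)

lemma mscale_real: "complex_of_real r *\<^sub>m (A::'n::finite cmat) = r *\<^sub>R A"
  by (simp add: vec_eq_iff complex_eq_iff)

lemma mscale_zero [simp]: "c *\<^sub>m (0::'n::finite cmat) = 0"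
  by (simp add: vec_eq_iff)

lemma mscale_add: "c *\<^sub>m ((A::'n::finite cmat) + B) = c *\<^sub>m A + c *\<^sub>m B"
  by (simp add: vec_eq_iff distrib_left)

lemma mscale_scaleR: "c *\<^sub>m (r *\<^sub>R (A::'n::finite cmat)) = r *\<^sub>R (c *\<^sub>m A)"
  by (simp add: vec_eq_iff)

lemma mscale_half: "(1/2) *\<^sub>m (A::'n::finite cmat) = (1/2::real) *\<^sub>R A"
  using mscale_real[of "1/2" A] by simp

lemma mscale_matrix_mul_left: "(c *\<^sub>m (A::'n::finite cmat)) ** B = c *\<^sub>m (A ** B)"
  by (simp add: matrix_matrix_mult_def vec_eq_iff sum_distrib_left mult.assoc)

lemma mscale_matrix_mul_right: "(A::'n::finite cmat) ** (c *\<^sub>m B) = c *\<^sub>m (A ** B)"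
  by (simp add: matrix_matrix_mult_def vec_eq_iff sum_distrib_left algebra_simps)

lemma cadj_nth [simp]: "cadj A $ i $ j = cnj (A $ j $ i)"
  by (simp add: cadj_def)

lemma cadj_cadj [simp]: "cadj (cadj A) = A"
  by (simp add: vec_eq_iff)

lemma cadj_zero [simp]: "cadj (0::'n::finite cmat) = 0"
  by (simp add: vec_eq_iff)

lemma cadj_add: "cadj ((A::'n::finite cmat) + B) = cadj A + cadj B"
  by (simp add: vec_eq_iff)

lemma cadj_diff: "cadj ((A::'n::finite cmat) - B) = cadj A - cadj B"
  by (simp add: vec_eq_iff)

lemma cadj_minus: "cadj (- (A::'n::finite cmat)) = - cadj A"
  by (simp add: vec_eq_iff)

lemma cadj_scaleR: "cadj (r *\<^sub>R (A::'n::finite cmat)) = r *\<^sub>R cadj A"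
  by (simp add: vec_eq_iff)

lemma cadj_mscale: "cadj (c *\<^sub>m (A::'n::finite cmat)) = cnj c *\<^sub>m cadj A"
  by (simp add: vec_eq_iff)

lemma cadj_mat: "cadj (mat 1 :: 'n::finite cmat) = mat 1"
  by (simp add: vec_eq_iff mat_def)

lemma cadj_matrix_mul: "cadj ((A::'n::finite cmat) ** B) = cadj B ** cadj A"
  by (simp add: vec_eq_iff matrix_matrix_mult_def mult.commute)

lemma cadj_sum: "cadj (\<Sum>k\<in>S. f k) = (\<Sum>k\<in>S. cadj (f k :: 'n::finite cmat))"
  by (induction S rule: infinite_finite_induct) (auto simp: cadj_add)

lemma bounded_linear_cadj: "bounded_linear (cadj :: 'n::finite cmat \<Rightarrow> 'n cmat)"
  by (simp add: linear_conv_bounded_linear[symmetric] linearI cadj_add cadj_scaleR)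

lemma self_adjoint_add: "self_adjoint A \<Longrightarrow> self_adjoint B \<Longrightarrow> self_adjoint (A + B)"
  by (simp add: self_adjoint_def cadj_add)

lemma self_adjoint_diff: "self_adjoint A \<Longrightarrow> self_adjoint B \<Longrightarrow> self_adjoint (A - B)"
  by (simp add: self_adjoint_def cadj_diff)

lemma mtrace_zero [simp]: "mtrace (0::'n::finite cmat) = 0"
  by (simp add: mtrace_def)

lemma mtrace_add: "mtrace ((A::'n::finite cmat) + B) = mtrace A + mtrace B"
  by (simp add: mtrace_def sum.distrib)

lemma mtrace_diff: "mtrace ((A::'n::finite cmat) - B) = mtrace A - mtrace B"
  by (simp add: mtrace_def sum_subtractf)

lemma mtrace_minus: "mtrace (- (A::'n::finite cmat)) = - mtrace A"
  by (simp add: mtrace_def sum_negf)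

lemma mtrace_mscale: "mtrace (c *\<^sub>m (A::'n::finite cmat)) = c * mtrace A"
  by (simp add: mtrace_def sum_distrib_left)

lemma mtrace_scaleR: "mtrace (r *\<^sub>R (A::'n::finite cmat)) = r *\<^sub>R mtrace A"
  by (simp add: mtrace_def scaleR_sum_right)

lemma mtrace_sum: "mtrace (\<Sum>k\<in>S. f k) = (\<Sum>k\<in>S. mtrace (f k :: 'n::finite cmat))"
  by (induction S rule: infinite_finite_induct) (auto simp: mtrace_add)

lemma mtrace_cadj: "mtrace (cadj (A::'n::finite cmat)) = cnj (mtrace A)"
  by (simp add: mtrace_def)

lemma mtrace_commute: "mtrace ((A::'n::finite cmat) ** B) = mtrace (B ** A)"
  unfolding mtrace_def matrix_matrix_mult_def
  by (simp, subst sum.swap, simp add: mult.commute)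

lemma mtrace_rotate3: "mtrace ((A::'n::finite cmat) ** B ** C) = mtrace (B ** C ** A)"
  using mtrace_commute[of A "B ** C"] by (simp add: matrix_mul_assoc)

lemma bounded_linear_mtrace_mult_left: "bounded_linear (\<lambda>A. mtrace ((M::'n::finite cmat) ** A))"
  by (simp add: linear_conv_bounded_linear[symmetric] linearI matrix_add_ldistrib mtrace_add
      matrix_scalar_ac scalar_matrix_assoc[symmetric] mtrace_scaleR)

lemma comm_eq_0_iff: "comm A B = 0 \<longleftrightarrow> A ** B = B ** (A::'n::finite cmat)"
  by (simp add: comm_def)

lemma commute_square:
  assumes "A ** B = B ** (A::'n::finite cmat)"
  shows "A ** (B ** B) = (B ** B) ** A"
  by (metis assms matrix_mul_assoc)

section \<open>Inner product and quadratic forms\<close>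

definition ip :: "complex^'n::finite \<Rightarrow> complex^'n \<Rightarrow> complex" where
  "ip x y = (\<Sum>i\<in>UNIV. cnj (x $ i) * y $ i)"

definition qf :: "'n::finite cmat \<Rightarrow> complex^'n \<Rightarrow> complex" where
  "qf A x = ip x (A *v x)"

definition outer :: "complex^'n::finite \<Rightarrow> 'n cmat" where
  "outer v = (\<chi> i j. v $ i * cnj (v $ j))"

lemma psd_iff_qf: "psd A \<longleftrightarrow> self_adjoint A \<and> (\<forall>x. 0 \<le> Re (qf A x))"
  by (simp add: psd_def qf_def ip_def)

lemma psd_self_adjoint: "psd A \<Longrightarrow> self_adjoint A"
  by (simp add: psd_def)

lemma psd_cadj: "psd A \<Longrightarrow> cadj A = A"
  by (simp add: psd_def self_adjoint_def)

lemma ip_cnj: "cnj (ip x y) = ip y x"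
  by (simp add: ip_def mult.commute)

lemma ip_zero_right [simp]: "ip x 0 = 0"
  by (simp add: ip_def)

lemma ip_zero_left [simp]: "ip 0 x = 0"
  by (simp add: ip_def)

lemma ip_add_left: "ip (x + y) z = ip x z + ip y z"
  by (simp add: ip_def algebra_simps sum.distrib)

lemma ip_add_right: "ip z (x + y) = ip z x + ip z y"
  by (simp add: ip_def algebra_simps sum.distrib)

lemma ip_scale_left: "ip (c *s x) y = cnj c * ip x y"
  by (simp add: ip_def sum_distrib_left algebra_simps)

lemma ip_scale_right: "ip x (c *s y) = c * ip x y"
  by (simp add: ip_def sum_distrib_left algebra_simps)

lemma ip_cadj: "ip x ((A::'n::finite cmat) *v y) = ip (cadj A *v x) y"
  unfolding ip_def matrix_vector_mult_def
  by (simp add: sum_distrib_left sum_distrib_right, subst sum.swap, simp add: algebra_simps)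

lemma ip_self: "ip x x = complex_of_real ((norm x)\<^sup>2)"
proof -
  have "ip x x = (\<Sum>i\<in>UNIV. complex_of_real ((cmod (x $ i))\<^sup>2))"
    unfolding ip_def
    by (rule sum.cong) (simp_all add: complex_norm_square[symmetric] mult.commute del: of_real_power)
  then show ?thesis
    by (simp add: norm_vec_def L2_set_def sum_nonneg)
qed

lemma ip_self_eq_0_iff: "ip x x = 0 \<longleftrightarrow> x = 0"
  by (simp add: ip_self)

lemma inner_eq_Re_ip: "inner v w = Re (ip v (w::complex^'n::finite))"
  by (simp add: inner_vec_def inner_complex_def ip_def Re_sum)

lemma matrix_vector_mult_scale: "(A::'n::finite cmat) *v (c *s x) = c *s (A *v x)"
  by (simp add: matrix_vector_mult_def vec_eq_iff sum_distrib_left algebra_simps)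

lemma qf_zero [simp]: "qf 0 x = 0"
  by (simp add: qf_def)

lemma qf_add: "qf ((A::'n::finite cmat) + B) x = qf A x + qf B x"
  by (simp add: qf_def ip_def matrix_vector_mult_add_rdistrib algebra_simps sum.distrib)

lemma qf_diff: "qf ((A::'n::finite cmat) - B) x = qf A x - qf B x"
  by (simp add: qf_def ip_def matrix_vector_mult_diff_rdistrib algebra_simps sum_subtractf)

lemma qf_minus: "qf (- (A::'n::finite cmat)) x = - qf A x"
  by (simp add: qf_def ip_def matrix_vector_mult_def sum_negf sum_distrib_left)

lemma qf_mscale: "qf (c *\<^sub>m (A::'n::finite cmat)) x = c * qf A x"
  by (simp add: qf_def ip_def matrix_vector_mult_def sum_distrib_left algebra_simps)

lemma qf_scaleR: "qf (r *\<^sub>R (A::'n::finite cmat)) x = complex_of_real r * qf A x"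
  by (simp add: mscale_real[symmetric] qf_mscale)

lemma qf_sum: "qf (\<Sum>k\<in>S. f k) x = (\<Sum>k\<in>S. qf (f k :: 'n::finite cmat) x)"
  by (induction S rule: infinite_finite_induct) (auto simp: qf_add)

lemma qf_mat: "qf (mat 1) x = complex_of_real ((norm x)\<^sup>2)"
  by (simp add: qf_def ip_self)

lemma qf_matrix_mul: "qf ((A::'n::finite cmat) ** B) x = ip (cadj A *v x) (B *v x)"
  by (simp add: qf_def ip_cadj matrix_vector_mul_assoc[symmetric])

lemma qf_sandwich: "qf (cadj B ** A ** (B::'n::finite cmat)) x = qf A (B *v x)"
  by (simp add: qf_def ip_cadj matrix_vector_mul_assoc[symmetric])

lemma qf_scaleR_vector: "qf (A::'n::finite cmat) (r *\<^sub>R x) = complex_of_real (r\<^sup>2) * qf A x"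
proof -
  have "r *\<^sub>R x = complex_of_real r *s x"
    by (simp add: vec_eq_iff complex_eq_iff)
  then show ?thesis
    by (simp add: qf_def matrix_vector_mult_scale ip_scale_left ip_scale_right power2_eq_square)
qed

lemma qf_outer: "qf (outer w) x = complex_of_real ((cmod (ip x w))\<^sup>2)"
proof -
  have "qf (outer w) x = ip x w * cnj (ip x w)"
    unfolding qf_def ip_def outer_def matrix_vector_mult_def
    by (simp add: sum_distrib_left sum_distrib_right algebra_simps)
      (subst sum.swap, simp add: algebra_simps)
  then show ?thesis
    by (simp only: complex_norm_square)
qed

lemma mtrace_outer: "mtrace ((A::'n::finite cmat) ** outer v) = qf A v"
  unfolding mtrace_def qf_def ip_def outer_def matrix_matrix_mult_def matrix_vector_mult_def
  by (simp add: sum_distrib_left mult.commute mult.left_commute)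

lemma qf_self_adjoint_real: "self_adjoint A \<Longrightarrow> qf A x = complex_of_real (Re (qf A x))"
  using ip_cnj[of x "A *v x"]
  by (simp add: self_adjoint_def qf_def ip_cadj complex_eq_iff)

lemma tendsto_qf:
  fixes A :: "'a \<Rightarrow> 'n::finite cmat"
  assumes "(A \<longlongrightarrow> A0) F" "(x \<longlongrightarrow> x0) F"
  shows "((\<lambda>s. qf (A s) (x s)) \<longlongrightarrow> qf A0 x0) F"
  unfolding qf_def ip_def matrix_vector_mult_def
  by (simp, intro tendsto_intros tendsto_vec_nth assms)

lemma bounded_linear_Re_qf: "bounded_linear (\<lambda>A::'n::finite cmat. Re (qf A x))"
  by (simp add: linear_conv_bounded_linear[symmetric] linearI qf_add qf_scaleR)

lemma discriminant_nonneg_le: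
  fixes a c :: real and b :: complex
  assumes a: "0 \<le> a" and c: "0 \<le> c"
    and q: "\<And>z::complex. 0 \<le> a + 2 * Re (z * b) + (cmod z)\<^sup>2 * c"
  shows "(cmod b)\<^sup>2 \<le> a * c"
proof -
  have bb: "cnj b * b = complex_of_real ((cmod b)\<^sup>2)"
    by (simp only: complex_norm_square mult.commute)
  show ?thesis
  proof (cases "c = 0")
    case True
    show ?thesis
    proof (rule ccontr)
      assume "\<not> ?thesis"
      then have b: "0 < (cmod b)\<^sup>2" using True by auto
      define z where "z = - complex_of_real ((a + 1) / (cmod b)\<^sup>2) * cnj b"
      have "z * b = - complex_of_real (a + 1)"
        using b by (simp add: z_def mult.assoc bb del: of_real_power)
      then show False using q[of z] True a by simp
    qed
  next
    case False
    then have c: "0 < c" using c by simp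
    define z where "z = - cnj b / complex_of_real c"
    have "z * b = - complex_of_real ((cmod b)\<^sup>2 / c)"
      by (simp add: z_def bb del: of_real_power)
    moreover have "(cmod z)\<^sup>2 * c = (cmod b)\<^sup>2 / c"
      using c by (simp add: z_def norm_divide power2_eq_square)
    ultimately have "0 \<le> a - (cmod b)\<^sup>2 / c"
      using q[of z] by simp
    then show ?thesis using c by (simp add: field_simps)
  qed
qed

lemma qf_expand:
  assumes "self_adjoint A"
  shows "Re (qf A (x + z *s y)) = Re (qf A x) + 2 * Re (z * ip x (A *v y)) + (cmod z)\<^sup>2 * Re (qf A y)"
proof -
  have "ip y (A *v x) = cnj (ip x (A *v y))"
    using assms by (simp add: ip_cnj ip_cadj self_adjoint_def)
  then have "qf A (x + z *s y)
      = qf A x + (z * ip x (A *v y) + cnj (z * ip x (A *v y))) + cnj z * z * qf A y"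
    by (simp add: qf_def matrix_vector_right_distrib matrix_vector_mult_scale ip_add_left
        ip_add_right ip_scale_left ip_scale_right algebra_simps)
  moreover have "cnj z * z = complex_of_real ((cmod z)\<^sup>2)"
    by (simp only: complex_norm_square mult.commute)
  ultimately show ?thesis
    by (simp del: of_real_power)
qed

lemma psd_cauchy_schwarz:
  assumes "psd A"
  shows "(cmod (ip x (A *v y)))\<^sup>2 \<le> Re (qf A x) * Re (qf A y)"
proof (rule discriminant_nonneg_le)
  show "0 \<le> Re (qf A x)" "0 \<le> Re (qf A y)"
    using assms by (auto simp: psd_iff_qf)
  show "0 \<le> Re (qf A x) + 2 * Re (z * ip x (A *v y)) + (cmod z)\<^sup>2 * Re (qf A y)" for z
  proof -
    have "0 \<le> Re (qf A (x + z *s y))"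
      using assms by (simp add: psd_iff_qf)
    then show ?thesis
      by (simp only: qf_expand[OF psd_self_adjoint[OF assms]])
  qed
qed

lemma psd_kernel:
  assumes "psd A" and "Re (qf A x) = 0"
  shows "A *v x = 0"
proof -
  have "(cmod (ip (A *v x) (A *v x)))\<^sup>2 \<le> Re (qf A (A *v x)) * Re (qf A x)"
    using psd_cauchy_schwarz[OF assms(1)] .
  then show ?thesis
    using assms(2) by (simp add: ip_self_eq_0_iff)
qed

lemma norm_qf_le: "\<exists>C\<ge>0. \<forall>x. cmod (qf (A::'n::finite cmat) x) \<le> C * (norm x)\<^sup>2"
proof -
  obtain K where K: "0 < K" "\<And>x. norm (A *v x) \<le> norm x * K"
    using bounded_linear.pos_bounded[of "\<lambda>x. A *v x"] matrix_vector_mul_linear linear_conv_bounded_linear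
    by blast
  have "(cmod (qf A x))\<^sup>2 \<le> (K * (norm x)\<^sup>2)\<^sup>2" for x
  proof -
    have "(cmod (ip x (mat 1 *v (A *v x))))\<^sup>2 \<le> Re (qf (mat 1) x) * Re (qf (mat 1) (A *v x))"
      by (rule psd_cauchy_schwarz) (simp add: psd_iff_qf self_adjoint_def cadj_mat qf_mat)
    also have "\<dots> \<le> (norm x)\<^sup>2 * (norm x * K)\<^sup>2"
      using K(2)[of x] by (simp add: qf_mat mult_left_mono power_mono)
    finally show ?thesis
      by (simp add: qf_def power2_eq_square algebra_simps)
  qed
  then show ?thesis
    using K(1) by (intro exI[of _ K]) (auto intro: power2_le_imp_le)
qed

lemma psd_add: "psd A \<Longrightarrow> psd B \<Longrightarrow> psd (A + B)"
  by (auto simp: psd_iff_qf self_adjoint_add qf_add)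

lemma psd_sum: "(\<And>k. k \<in> S \<Longrightarrow> psd (f k)) \<Longrightarrow> psd (\<Sum>k\<in>S. (f k :: 'n::finite cmat))"
proof (induction S rule: infinite_finite_induct)
  case (insert k S)
  then show ?case by (simp add: psd_add)
qed (simp_all add: psd_iff_qf self_adjoint_def)

lemma psd_sandwich: "psd A \<Longrightarrow> psd (cadj B ** A ** B)"
  by (auto simp: psd_iff_qf self_adjoint_def cadj_matrix_mul qf_sandwich matrix_mul_assoc)

lemma psd_outer: "psd (outer w)"
  by (simp add: psd_iff_qf qf_outer) (simp add: self_adjoint_def outer_def vec_eq_iff mult.commute)

section \<open>Positive semidefinite matrices and traces\<close>

lemma matrix_vector_mult_axis: "((A::'n::finite cmat) *v axis a 1) $ i = A $ i $ a"
  by (simp add: matrix_vector_mult_def axis_def if_distrib if_distribR cong: if_cong)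

lemma qf_axis: "qf A (axis a 1) = A $ a $ a"
  unfolding qf_def ip_def matrix_vector_mult_axis
  by (simp add: axis_def if_distrib if_distribR cong: if_cong)

lemma psd_minus_outer_column:
  fixes \<rho> :: "'n::finite cmat" and a :: 'n
  defines "r \<equiv> Re (\<rho> $ a $ a)"
  defines "w \<equiv> complex_of_real (1 / sqrt r) *s (\<rho> *v axis a 1)"
  assumes \<rho>: "psd \<rho>" and r: "0 < r"
  shows "psd (\<rho> - outer w)" and "(\<rho> - outer w) *v axis a 1 = 0"
proof -
  let ?e = "axis a 1 :: complex^'n"
  have raa: "\<rho> $ a $ a = complex_of_real r"
    using qf_self_adjoint_real[OF psd_self_adjoint[OF \<rho>], of ?e] by (simp add: r_def qf_axis)
  have w: "w $ i = \<rho> $ i $ a / complex_of_real (sqrt r)" for i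
    by (simp add: w_def matrix_vector_mult_axis divide_inverse mult.commute)
  have "w $ a = complex_of_real (r / sqrt r)"
    by (simp add: w raa)
  then have wa: "w $ a = complex_of_real (sqrt r)"
    using r by (simp add: real_div_sqrt)
  have "(outer w *v ?e) $ i = \<rho> $ i $ a" for i
    using r by (simp add: matrix_vector_mult_axis outer_def wa) (simp add: w)
  then show "(\<rho> - outer w) *v ?e = 0"
    by (simp add: matrix_vector_mult_diff_rdistrib matrix_vector_mult_axis vec_eq_iff)
  have "0 \<le> Re (qf (\<rho> - outer w) x)" for x
  proof -
    have "(cmod (ip x w))\<^sup>2 = (cmod (ip x (\<rho> *v ?e)))\<^sup>2 / r"
      using r by (simp add: w_def ip_scale_right norm_mult norm_divide power_divide)
    also have "\<dots> \<le> Re (qf \<rho> x) * Re (qf \<rho> ?e) / r"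
      using psd_cauchy_schwarz[OF \<rho>, of x ?e] r by (simp add: divide_right_mono)
    also have "\<dots> = Re (qf \<rho> x)"
      using r by (simp add: r_def qf_axis)
    finally show ?thesis
      by (simp add: qf_diff qf_outer)
  qed
  then show "psd (\<rho> - outer w)"
    using self_adjoint_diff[OF psd_self_adjoint[OF \<rho>] psd_self_adjoint[OF psd_outer]]
    by (simp add: psd_iff_qf)
qed

(* One step of a Cholesky factorisation: a rank-one part carried by column a is split off,
   leaving row and column a zero. *)
lemma psd_split_outer:
  fixes \<rho> :: "'n::finite cmat"
  assumes \<rho>: "psd \<rho>"
  obtains w where "psd (\<rho> - outer w)" "\<And>i. (\<rho> - outer w) $ i $ a = 0"
    "\<And>i. (\<rho> - outer w) $ a $ i = 0" "\<And>i. \<rho> $ i $ a = 0 \<Longrightarrow> w $ i = 0"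
proof -
  obtain w where w: "psd (\<rho> - outer w)" "(\<rho> - outer w) *v axis a 1 = 0"
    "\<And>i. \<rho> $ i $ a = 0 \<Longrightarrow> w $ i = 0"
  proof (cases "Re (\<rho> $ a $ a) = 0")
    case True
    then have "\<rho> *v axis a 1 = 0"
      using psd_kernel[OF \<rho>] by (simp add: qf_axis)
    moreover have "outer 0 = (0 :: 'n cmat)"
      by (simp add: outer_def vec_eq_iff)
    ultimately show thesis
      using \<rho> by (intro that[of 0]) auto
  next
    case False
    moreover have "0 \<le> Re (\<rho> $ a $ a)"
      using \<rho> by (metis psd_iff_qf qf_axis)
    ultimately have "0 < Re (\<rho> $ a $ a)"
      by simp
    then show thesis
      using psd_minus_outer_column[OF \<rho>]
      by (intro that[of "complex_of_real (1 / sqrt (Re (\<rho> $ a $ a))) *s (\<rho> *v axis a 1)"])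
        (auto simp: matrix_vector_mult_axis)
  qed
  have col: "(\<rho> - outer w) $ i $ a = 0" for i
    using arg_cong[OF w(2), of "\<lambda>v. v $ i"] by (simp add: matrix_vector_mult_axis)
  have "cadj (\<rho> - outer w) = \<rho> - outer w"
    using w(1) by (rule psd_cadj)
  then have "(\<rho> - outer w) $ a $ i = cnj ((\<rho> - outer w) $ i $ a)" for i
    by (metis cadj_nth)
  then show thesis
    using w(1,3) col by (intro that) simp_all
qed

lemma psd_sum_outer_support:
  fixes \<rho> :: "'n::finite cmat"
  assumes "psd \<rho>" and "\<And>i j. i \<notin> S \<or> j \<notin> S \<Longrightarrow> \<rho> $ i $ j = 0"
  shows "\<exists>v. \<rho> = (\<Sum>k\<in>S. outer (v k))"
  using finite[of S] assms
proof (induction S arbitrary: \<rho>)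
  case empty
  then show ?case by (simp add: vec_eq_iff)
next
  case (insert a S)
  obtain w where w: "psd (\<rho> - outer w)" "\<And>i. (\<rho> - outer w) $ i $ a = 0"
    "\<And>i. (\<rho> - outer w) $ a $ i = 0" "\<And>i. \<rho> $ i $ a = 0 \<Longrightarrow> w $ i = 0"
    using psd_split_outer[OF insert.prems(1), where a = a] by blast
  have "(\<rho> - outer w) $ i $ j = 0" if "i \<notin> S \<or> j \<notin> S" for i j
  proof (cases "i = a \<or> j = a")
    case False
    then have "\<rho> $ i $ j = 0" "w $ i = 0 \<or> w $ j = 0"
      using that insert.prems(2) w(4) by auto
    then show ?thesis
      by (auto simp: outer_def)
  qed (use w(2,3) in auto)
  then obtain v where v: "\<rho> - outer w = (\<Sum>k\<in>S. outer (v k))"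
    using insert.IH w(1) by blast
  have "\<rho> = outer w + (\<Sum>k\<in>S. outer (v k))"
    by (simp flip: v)
  also have "\<dots> = (\<Sum>k\<in>insert a S. outer ((v(a := w)) k))"
    using insert.hyps by (simp add: sum.insert) (rule sum.cong, auto)
  finally show ?case by blast
qed

lemma mtrace_mult_sum_outer: "mtrace (A ** (\<Sum>k\<in>S. outer (v k))) = (\<Sum>k\<in>S. qf A (v k))"
  by (simp only: matrix_mul_sum_right mtrace_sum mtrace_outer)

lemma density_state_sum_outer:
  fixes \<rho> :: "'n::finite cmat"
  assumes "density_state \<rho>"
  obtains v :: "'n \<Rightarrow> complex^'n"
  where "\<rho> = (\<Sum>k\<in>UNIV. outer (v k))" "(\<Sum>k\<in>UNIV. (norm (v k))\<^sup>2) = 1"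
proof -
  obtain v :: "'n \<Rightarrow> complex^'n" where v: "\<rho> = (\<Sum>k\<in>UNIV. outer (v k))"
    using psd_sum_outer_support[of \<rho> UNIV] assms by (auto simp: density_state_def)
  have "1 = mtrace (mat 1 ** \<rho>)"
    using assms by (simp add: density_state_def)
  also have "\<dots> = complex_of_real (\<Sum>k\<in>UNIV. (norm (v k))\<^sup>2)"
    by (simp add: v mtrace_mult_sum_outer qf_mat del: matrix_mul_lid)
  finally show thesis
    using v by (intro that) (simp_all add: complex_eq_iff)
qed

lemma mtrace_mult_psd:
  fixes A \<rho> :: "'n::finite cmat"
  assumes "psd A" "psd \<rho>"
  shows "0 \<le> Re (mtrace (A ** \<rho>))" "Im (mtrace (A ** \<rho>)) = 0"
proof -
  obtain v :: "'n \<Rightarrow> complex^'n" where "\<rho> = (\<Sum>k\<in>UNIV. outer (v k))"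
    using psd_sum_outer_support[of \<rho> UNIV] assms(2) by auto
  then have tr: "mtrace (A ** \<rho>) = (\<Sum>k\<in>UNIV. qf A (v k))"
    by (simp add: mtrace_mult_sum_outer)
  show "0 \<le> Re (mtrace (A ** \<rho>))"
    using assms(1) by (simp add: tr Re_sum psd_iff_qf sum_nonneg)
  show "Im (mtrace (A ** \<rho>)) = 0"
    unfolding tr Im_sum
    by (metis (no_types) Im_complex_of_real assms(1) psd_self_adjoint qf_self_adjoint_real sum.neutral)
qed

lemma mtrace_density_bounded:
  "\<exists>K. \<forall>\<rho>. density_state \<rho> \<longrightarrow> cmod (mtrace ((M::'n::finite cmat) ** \<rho>)) \<le> K"
proof -
  obtain C where C: "\<And>x. cmod (qf M x) \<le> C * (norm x)\<^sup>2"
    using norm_qf_le by blast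
  have "cmod (mtrace (M ** \<rho>)) \<le> C" if \<rho>: "density_state \<rho>" for \<rho>
  proof -
    obtain v :: "'n \<Rightarrow> complex^'n"
      where v: "\<rho> = (\<Sum>k\<in>UNIV. outer (v k))" "(\<Sum>k\<in>UNIV. (norm (v k))\<^sup>2) = 1"
      using density_state_sum_outer[OF \<rho>] .
    have "cmod (mtrace (M ** \<rho>)) \<le> (\<Sum>k\<in>UNIV. cmod (qf M (v k)))"
      unfolding v(1) mtrace_mult_sum_outer by (rule norm_sum)
    also have "\<dots> \<le> (\<Sum>k\<in>UNIV. C * (norm (v k))\<^sup>2)"
      by (rule sum_mono) (rule C)
    also have "\<dots> = C"
      by (simp add: sum_distrib_left[symmetric] v(2))
    finally show ?thesis .
  qed
  then show ?thesis by blast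
qed

lemma mtrace_density_lower_bound:
  fixes W :: "'n::finite cmat"
  assumes "\<And>x. m * (norm x)\<^sup>2 \<le> Re (qf W x)" and "density_state \<rho>"
  shows "m \<le> Re (mtrace (W ** \<rho>))"
proof -
  obtain v :: "'n \<Rightarrow> complex^'n"
    where v: "\<rho> = (\<Sum>k\<in>UNIV. outer (v k))" "(\<Sum>k\<in>UNIV. (norm (v k))\<^sup>2) = 1"
    using density_state_sum_outer[OF assms(2)] .
  have "m = (\<Sum>k\<in>UNIV. m * (norm (v k))\<^sup>2)"
    by (simp add: sum_distrib_left[symmetric] v(2))
  also have "\<dots> \<le> (\<Sum>k\<in>UNIV. Re (qf W (v k)))"
    by (rule sum_mono) (rule assms(1))
  also have "\<dots> = Re (mtrace (W ** \<rho>))"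
    unfolding v(1) mtrace_mult_sum_outer by (simp add: Re_sum)
  finally show ?thesis .
qed

lemma mtrace_cauchy_schwarz:
  fixes P \<rho> X Y :: "'n::finite cmat"
  assumes P: "psd P" and \<rho>: "psd \<rho>"
  shows "(cmod (mtrace (cadj X ** P ** Y ** \<rho>)))\<^sup>2
     \<le> Re (mtrace (cadj X ** P ** X ** \<rho>)) * Re (mtrace (cadj Y ** P ** Y ** \<rho>))"
proof -
  define s where "s A B = mtrace (cadj A ** P ** B ** \<rho>)" for A B :: "'n cmat"
  have nonneg: "0 \<le> Re (s A A)" for A
    unfolding s_def using mtrace_mult_psd(1)[OF psd_sandwich[OF P] \<rho>] .
  have "cnj (s X Y) = mtrace (\<rho> ** cadj Y ** P ** X)"
    using P \<rho> by (simp add: s_def mtrace_cadj[symmetric] cadj_matrix_mul matrix_mul_assoc psd_cadj)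
  also have "\<dots> = s Y X"
    unfolding s_def using mtrace_commute[of \<rho> "cadj Y ** P ** X"] by (simp add: matrix_mul_assoc)
  finally have swap: "s Y X = cnj (s X Y)" ..
  have add_left: "s (A1 + A2) B = s A1 B + s A2 B" for A1 A2 B
    unfolding s_def by (simp add: cadj_add matrix_add_rdistrib mtrace_add)
  have add_right: "s A (B1 + B2) = s A B1 + s A B2" for A B1 B2
    unfolding s_def by (simp add: matrix_add_ldistrib matrix_add_rdistrib mtrace_add)
  have scale_left: "s (c *\<^sub>m A) B = cnj c * s A B" for c A B
    unfolding s_def by (simp add: cadj_mscale mscale_matrix_mul_left mtrace_mscale)
  have scale_right: "s A (c *\<^sub>m B) = c * s A B" for c A B
    unfolding s_def by (simp add: mscale_matrix_mul_right mscale_matrix_mul_left mtrace_mscale)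
  have expand: "s (X + z *\<^sub>m Y) (X + z *\<^sub>m Y)
      = s X X + (z * s X Y + cnj (z * s X Y)) + cnj z * z * s Y Y" for z
    by (simp add: add_left add_right scale_left scale_right swap algebra_simps)
  show ?thesis
    unfolding s_def[symmetric]
  proof (rule discriminant_nonneg_le[OF nonneg nonneg])
    fix z
    have "cnj z * z = complex_of_real ((cmod z)\<^sup>2)"
      by (simp only: complex_norm_square mult.commute)
    then show "0 \<le> Re (s X X) + 2 * Re (z * s X Y) + (cmod z)\<^sup>2 * Re (s Y Y)"
      using nonneg[of "X + z *\<^sub>m Y"] by (simp add: expand del: of_real_power)
  qed
qed

lemma Re_mtrace_swap:
  assumes "self_adjoint A" "self_adjoint B" "self_adjoint \<rho>"
  shows "Re (mtrace ((A::'n::finite cmat) ** B ** \<rho>)) = Re (mtrace (B ** A ** \<rho>))"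
proof -
  have "cnj (mtrace (A ** B ** \<rho>)) = mtrace (\<rho> ** B ** A)"
    using assms by (simp add: mtrace_cadj[symmetric] cadj_matrix_mul matrix_mul_assoc self_adjoint_def)
  also have "\<dots> = mtrace (B ** A ** \<rho>)"
    by (rule mtrace_rotate3)
  finally have "mtrace (B ** A ** \<rho>) = cnj (mtrace (A ** B ** \<rho>))" ..
  then show ?thesis by simp
qed

lemma Re_mtrace_mono:
  assumes "loewner_le A B" "psd \<rho>"
  shows "Re (mtrace (A ** \<rho>)) \<le> Re (mtrace (B ** (\<rho>::'n::finite cmat)))"
  using mtrace_mult_psd(1)[OF assms[unfolded loewner_le_def]]
  by (simp add: matrix_diff_rdistrib mtrace_diff)

lemma Re_mtrace_square_le:
  fixes W P \<rho> :: "'n::finite cmat"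
  assumes "psd P" "psd \<rho>" "self_adjoint W"
  shows "(Re (mtrace (W ** P ** \<rho>)))\<^sup>2 \<le> Re (mtrace (W ** P ** W ** \<rho>)) * Re (mtrace (P ** \<rho>))"
proof -
  have "(Re (mtrace (W ** P ** \<rho>)))\<^sup>2 \<le> (cmod (mtrace (W ** P ** \<rho>)))\<^sup>2"
    by (subst abs_le_square_iff[symmetric]) (simp add: abs_Re_le_cmod)
  also have "\<dots> \<le> Re (mtrace (W ** P ** W ** \<rho>)) * Re (mtrace (P ** \<rho>))"
    using mtrace_cauchy_schwarz[OF assms(1,2), of W "mat 1"] assms(3)
    by (simp add: self_adjoint_def cadj_mat)
  finally show ?thesis .
qed

section \<open>Eigenvalues\<close>

lemma eigenvector_qf: "W *v v = \<mu> *s v \<Longrightarrow> qf W v = \<mu> * complex_of_real ((norm v)\<^sup>2)"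
  by (simp add: qf_def ip_scale_right ip_self)

lemma self_adjoint_eigenvalue_real:
  assumes "self_adjoint W" "W *v v = \<mu> *s v" "v \<noteq> 0"
  shows "Im \<mu> = 0"
proof -
  have "Im (qf W v) = 0"
    by (metis Im_complex_of_real assms(1) qf_self_adjoint_real)
  then show ?thesis
    using assms(3) by (simp add: eigenvector_qf[OF assms(2)])
qed

lemma self_adjoint_eigenvectors_orthogonal:
  assumes W: "self_adjoint W" and v: "W *v v = \<mu> *s v" "v \<noteq> 0" and w: "W *v w = \<nu> *s w"
    and "\<mu> \<noteq> \<nu>"
  shows "ip v w = 0"
proof -
  have "cnj \<mu> = \<mu>"
    using self_adjoint_eigenvalue_real[OF W v] by (simp add: complex_eq_iff)
  moreover have "ip v (W *v w) = ip (cadj W *v v) w"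
    by (rule ip_cadj)
  ultimately have "(\<nu> - \<mu>) * ip v w = 0"
    using W v w by (simp add: self_adjoint_def ip_scale_right ip_scale_left algebra_simps)
  then show ?thesis
    using \<open>\<mu> \<noteq> \<nu>\<close> by simp
qed

lemma finite_eigenvalues:
  assumes W: "self_adjoint (W::'n::finite cmat)"
  shows "finite {\<mu>. is_eigenvalue W \<mu>}"
proof -
  define E where "E = {\<mu>. is_eigenvalue W \<mu>}"
  define ev where "ev \<mu> = (SOME v. v \<noteq> 0 \<and> W *v v = \<mu> *s v)" for \<mu>
  have ev: "ev \<mu> \<noteq> 0 \<and> W *v ev \<mu> = \<mu> *s ev \<mu>" if "\<mu> \<in> E" for \<mu>
    using that someI_ex[of "\<lambda>v. v \<noteq> 0 \<and> W *v v = \<mu> *s v"]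
    by (auto simp: E_def ev_def is_eigenvalue_def)
  have "inj_on ev E"
  proof (rule inj_onI)
    fix \<mu> \<nu> assume "\<mu> \<in> E" "\<nu> \<in> E" "ev \<mu> = ev \<nu>"
    then have "(\<mu> - \<nu>) *s ev \<mu> = 0" "ev \<mu> \<noteq> 0"
      using ev by (metis vector_sub_rdistrib eq_iff_diff_eq_0)+
    then show "\<mu> = \<nu>"
      by (simp add: vector_mul_eq_0)
  qed
  moreover have "pairwise orthogonal (ev ` E)"
    unfolding pairwise_def orthogonal_def
  proof clarify
    fix \<mu> \<nu> assume "\<mu> \<in> E" "\<nu> \<in> E" "ev \<mu> \<noteq> ev \<nu>"
    then have "ip (ev \<mu>) (ev \<nu>) = 0"
      using self_adjoint_eigenvectors_orthogonal[OF W] ev by blast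
    then show "ev \<mu> \<bullet> ev \<nu> = 0"
      by (simp add: inner_eq_Re_ip)
  qed
  moreover have "0 \<notin> ev ` E"
    using ev by auto
  ultimately have "finite (ev ` E)"
    using pairwise_orthogonal_independent finiteI_independent by blast
  with \<open>inj_on ev E\<close> show ?thesis
    by (simp add: E_def finite_image_iff)
qed

lemma psd_eigenvalue_nonneg:
  assumes "psd W" "is_eigenvalue W \<mu>"
  shows "0 \<le> Re \<mu>"
proof -
  obtain v where v: "v \<noteq> 0" "W *v v = \<mu> *s v"
    using assms(2) by (auto simp: is_eigenvalue_def)
  have "0 \<le> Re (qf W v)"
    using assms(1) by (simp add: psd_iff_qf)
  then show ?thesis
    using v by (simp add: eigenvector_qf zero_le_mult_iff)
qed

lemma smallest_eigenvalue_psd_eq_0: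
  assumes W: "psd W" and "x \<noteq> 0" "W *v x = 0"
  shows "smallest_eigenvalue W = 0"
proof -
  define E where "E = {\<mu>. is_eigenvalue W \<mu>}"
  have "Min (Re ` E) = 0"
  proof (rule Min_eqI)
    show "finite (Re ` E)"
      using finite_eigenvalues[OF psd_self_adjoint[OF W]] by (simp add: E_def)
    show "0 \<le> y" if "y \<in> Re ` E" for y
      using that psd_eigenvalue_nonneg[OF W] by (auto simp: E_def)
    have "0 \<in> E"
      using assms by (auto simp: E_def is_eigenvalue_def)
    then show "0 \<in> Re ` E"
      by force
  qed
  then show ?thesis
    by (simp add: smallest_eigenvalue_def E_def)
qed

lemma psd_coercive:
  assumes W: "psd (W::'n::finite cmat)" and ker: "\<And>x. W *v x = 0 \<Longrightarrow> x = 0"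
  obtains m where "0 < m" "\<And>x. m * (norm x)\<^sup>2 \<le> Re (qf W x)"
proof -
  have "continuous_on (sphere 0 1) (\<lambda>x. Re (qf W x))"
    unfolding continuous_on_def by (intro ballI tendsto_Re tendsto_qf tendsto_const tendsto_ident_at)
  moreover have "sphere (0::complex^'n) 1 \<noteq> {}"
    using vector_choose_size[of 1] by (auto simp: sphere_def)
  ultimately obtain y where y: "y \<in> sphere 0 1" "\<And>z. z \<in> sphere 0 1 \<Longrightarrow> Re (qf W y) \<le> Re (qf W z)"
    using continuous_attains_inf[OF compact_sphere] by blast
  have "y \<noteq> 0"
    using y(1) by auto
  then have "Re (qf W y) \<noteq> 0"
    using psd_kernel[OF W] ker by blast
  moreover have "0 \<le> Re (qf W y)"
    using W by (simp add: psd_iff_qf)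
  ultimately have pos: "0 < Re (qf W y)"
    by simp
  have "Re (qf W y) * (norm x)\<^sup>2 \<le> Re (qf W x)" for x
  proof (cases "x = 0")
    case False
    define z where "z = (1 / norm x) *\<^sub>R x"
    have "Re (qf W x) = (norm x)\<^sup>2 * Re (qf W z)"
      using False by (simp add: z_def qf_scaleR_vector power2_eq_square)
    moreover have "Re (qf W y) \<le> Re (qf W z)"
      using y(2) False by (simp add: z_def)
    ultimately show ?thesis
      using mult_right_mono[of "Re (qf W y)" "Re (qf W z)" "(norm x)\<^sup>2"] by (simp add: mult.commute)
  qed (simp add: qf_def)
  with pos show thesis
    by (rule that)
qed

lemma smallest_eigenvalue_eq_0_if_tendsto:
  fixes W :: "'n::finite cmat" and \<rho> :: "real \<Rightarrow> 'n cmat"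
  assumes W: "psd W" and \<rho>: "\<And>t. 0 \<le> t \<Longrightarrow> density_state (\<rho> t)"
    and lim: "((\<lambda>t. mtrace (W ** \<rho> t)) \<longlongrightarrow> 0) at_top"
  shows "smallest_eigenvalue W = 0"
proof -
  have "\<exists>x. x \<noteq> 0 \<and> W *v x = 0"
  proof (rule ccontr)
    assume "\<not> ?thesis"
    then obtain m where m: "0 < m" "\<And>x. m * (norm x)\<^sup>2 \<le> Re (qf W x)"
      using psd_coercive[OF W] by blast
    have "\<forall>\<^sub>F t in at_top. Re (mtrace (W ** \<rho> t)) < m"
      using tendsto_Re[OF lim] m(1) by (simp add: order_tendsto_iff)
    moreover have "\<forall>\<^sub>F t in at_top. m \<le> Re (mtrace (W ** \<rho> t))"
      using eventually_ge_at_top[of 0] by eventually_elim (rule mtrace_density_lower_bound[OF m(2) \<rho>])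
    ultimately have "\<forall>\<^sub>F t::real in at_top. False"
      by eventually_elim simp
    then show False
      by simp
  qed
  then show ?thesis
    using smallest_eigenvalue_psd_eq_0[OF W] by blast
qed

section \<open>Differential equations on the half-line\<close>

lemma at_within_nonneg: "0 < (t::real) \<Longrightarrow> at t within {0..} = at t"
  by (rule at_within_interior) simp

lemma nonincreasing_if_derivative_nonpos:
  fixes f f' :: "real \<Rightarrow> real"
  assumes f: "\<And>t. 0 \<le> t \<Longrightarrow> (f has_real_derivative f' t) (at t within {0..})"
    and nonpos: "\<And>t. 0 \<le> t \<Longrightarrow> f' t \<le> 0" and "0 \<le> a" "a \<le> b"
  shows "f b \<le> f a"
proof (rule DERIV_nonpos_imp_decreasing_open[OF \<open>a \<le> b\<close>])
  fix t assume "a < t" "t < b"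
  then have "0 < t"
    using \<open>0 \<le> a\<close> by simp
  then show "\<exists>y. (f has_real_derivative y) (at t) \<and> y \<le> 0"
    using f[of t] nonpos[of t] at_within_nonneg[of t] by auto
next
  have "continuous_on {0..} f"
    unfolding continuous_on_eq_continuous_within using f DERIV_continuous by blast
  then show "continuous_on {a..b} f"
    by (rule continuous_on_subset) (use \<open>0 \<le> a\<close> in auto)
qed

lemma linear_ode_zero:
  fixes F :: "'a::real_inner \<Rightarrow> 'a" and x :: "real \<Rightarrow> 'a"
  assumes F: "bounded_linear F"
    and x: "\<And>t. 0 \<le> t \<Longrightarrow> (x has_vector_derivative F (x t)) (at t within {0..})"
    and "x 0 = 0" and "0 \<le> t"
  shows "x t = 0"
proof -
  obtain K where K: "0 < K" "\<And>y. norm (F y) \<le> norm y * K"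
    using bounded_linear.pos_bounded[OF F] by blast
  define u where "u t = exp (- 2 * K * t) * (x t \<bullet> x t)" for t
  define u' where "u' t = exp (- 2 * K * t) * (2 * (x t \<bullet> F (x t)) - 2 * K * (x t \<bullet> x t))" for t
  have "(u has_real_derivative u' t) (at t within {0..})" if "0 \<le> t" for t
  proof -
    have "((\<lambda>t. x t \<bullet> x t) has_real_derivative 2 * (x t \<bullet> F (x t))) (at t within {0..})"
      using bounded_bilinear.has_vector_derivative[OF bounded_bilinear_inner x[OF that] x[OF that]]
      by (simp add: has_real_derivative_iff_has_vector_derivative inner_commute)
    then show ?thesis
      unfolding u_def u'_def
      by (auto intro!: derivative_eq_intros simp: algebra_simps)
  qed
  moreover have "u' t \<le> 0" for t
  proof -
    have "x t \<bullet> F (x t) \<le> norm (x t) * (norm (x t) * K)"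
      using norm_cauchy_schwarz[of "x t" "F (x t)"] K(2)[of "x t"]
      by (meson mult_left_mono norm_ge_zero order_trans)
    then show ?thesis
      by (simp add: u'_def mult_nonneg_nonpos power2_norm_eq_inner[symmetric] power2_eq_square
          algebra_simps)
  qed
  ultimately have "u t \<le> u 0"
    using nonincreasing_if_derivative_nonpos[of u u' 0 t] \<open>0 \<le> t\<close> by blast
  then have "x t \<bullet> x t \<le> 0"
    using \<open>x 0 = 0\<close> by (simp add: u_def mult_le_0_iff)
  then have "x t \<bullet> x t = 0"
    using inner_ge_zero[of "x t"] by linarith
  then show ?thesis
    by simp
qed

lemma first_nonpositive_time:
  fixes \<sigma> :: "real \<Rightarrow> 'n::finite cmat"
  assumes cont: "continuous_on {0..} \<sigma>" and "0 \<le> t" "x \<noteq> 0" "Re (qf (\<sigma> t) x) \<le> 0"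
  obtains s y where "0 \<le> s" "norm y = 1" "Re (qf (\<sigma> s) y) \<le> 0"
    "\<And>\<tau> z. 0 \<le> \<tau> \<Longrightarrow> \<tau> < s \<Longrightarrow> z \<noteq> 0 \<Longrightarrow> 0 < Re (qf (\<sigma> \<tau>) z)"
proof -
  define S where "S = {0..t} \<times> sphere (0::complex^'n) 1"
  define K where "K = {p \<in> S. Re (qf (\<sigma> (fst p)) (snd p)) \<le> 0}"
  have unit: "Re (qf (\<sigma> \<tau>) ((1 / norm z) *\<^sub>R z)) \<le> 0" if "Re (qf (\<sigma> \<tau>) z) \<le> 0" for \<tau> z
    using that by (simp add: qf_scaleR_vector mult_nonneg_nonpos)
  have "continuous_on S (\<lambda>p. \<sigma> (fst p))"
    by (rule continuous_on_compose2[OF cont continuous_on_fst[OF continuous_on_id]]) (auto simp: S_def)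
  moreover have "continuous_on S snd"
    by (rule continuous_on_snd[OF continuous_on_id])
  ultimately have "continuous_on S (\<lambda>p. Re (qf (\<sigma> (fst p)) (snd p)))"
    unfolding continuous_on_def by (simp add: tendsto_Re tendsto_qf)
  then have "closed K"
    unfolding K_def by (rule continuous_on_closed_Collect_le[OF _ continuous_on_const])
      (simp add: S_def closed_Times)
  moreover have "compact S"
    by (simp add: S_def compact_Times)
  ultimately have "compact (S \<inter> K)"
    by (simp add: compact_Int_closed)
  moreover have "S \<inter> K = K"
    by (auto simp: K_def)
  ultimately have "compact K"
    by simp
  moreover have "(t, (1 / norm x) *\<^sub>R x) \<in> K"
    using assms unit by (simp add: K_def S_def)
  ultimately obtain p where p: "p \<in> K" and min: "\<And>p'. p' \<in> K \<Longrightarrow> fst p \<le> fst p'"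
    using continuous_attains_inf[of K fst] continuous_on_fst[OF continuous_on_id] by blast
  show thesis
  proof (rule that[of "fst p" "snd p"])
    show "0 \<le> fst p" "norm (snd p) = 1" "Re (qf (\<sigma> (fst p)) (snd p)) \<le> 0"
      using p by (auto simp: K_def S_def)
    show "0 < Re (qf (\<sigma> \<tau>) z)" if "0 \<le> \<tau>" "\<tau> < fst p" "z \<noteq> 0" for \<tau> z
    proof (rule ccontr)
      assume "\<not> ?thesis"
      then have "(\<tau>, (1 / norm z) *\<^sub>R z) \<in> K"
        using that p unit by (auto simp: K_def S_def)
      then show False
        using min that(2) by fastforce
    qed
  qed
qed

lemma psd_if_positive_before:
  fixes \<sigma> :: "real \<Rightarrow> 'n::finite cmat"
  assumes cont: "continuous_on {0..} \<sigma>" and "0 < s" and "self_adjoint (\<sigma> s)"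
    and before: "\<And>\<tau> z. 0 \<le> \<tau> \<Longrightarrow> \<tau> < s \<Longrightarrow> z \<noteq> 0 \<Longrightarrow> 0 < Re (qf (\<sigma> \<tau>) z)"
  shows "psd (\<sigma> s)"
proof -
  have "isCont \<sigma> s"
    using continuous_on_interior[OF cont] \<open>0 < s\<close> by simp
  then have lim: "(\<sigma> \<longlongrightarrow> \<sigma> s) (at_left s)"
    by (simp add: isCont_def filterlim_at_split)
  have "0 \<le> Re (qf (\<sigma> s) z)" for z
  proof (cases "z = 0")
    case False
    have "\<forall>\<^sub>F \<tau> in at_left s. 0 \<le> Re (qf (\<sigma> \<tau>) z)"
      using eventually_at_left_real[OF \<open>0 < s\<close>]
      by eventually_elim (use before False in \<open>auto intro: less_imp_le\<close>)
    with tendsto_Re[OF tendsto_qf[OF lim tendsto_const]] show ?thesis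
      by (rule tendsto_lowerbound) simp
  qed (simp add: qf_def)
  with \<open>self_adjoint (\<sigma> s)\<close> show ?thesis
    by (simp add: psd_iff_qf)
qed

(* At the first time s at which the form of sigma reaches 0, at y, the matrix sigma s is psd with y
   in its kernel; tangency and the positivity of P then make the form at y strictly increasing at s,
   although it is positive before s. *)
lemma qf_positive_preserved:
  fixes \<sigma> P :: "real \<Rightarrow> 'n::finite cmat" and F :: "'n cmat \<Rightarrow> 'n cmat"
  assumes tangent: "\<And>S y. psd S \<Longrightarrow> S *v y = 0 \<Longrightarrow> 0 \<le> Re (qf (F S) y)"
    and sa: "\<And>t. 0 \<le> t \<Longrightarrow> self_adjoint (\<sigma> t)"
    and deriv: "\<And>t. 0 \<le> t \<Longrightarrow> (\<sigma> has_vector_derivative F (\<sigma> t) + P t) (at t within {0..})"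
    and P: "\<And>t x. 0 \<le> t \<Longrightarrow> x \<noteq> 0 \<Longrightarrow> 0 < Re (qf (P t) x)"
    and \<sigma>0: "\<And>x. x \<noteq> 0 \<Longrightarrow> 0 < Re (qf (\<sigma> 0) x)"
    and "0 \<le> t" "x \<noteq> 0"
  shows "0 < Re (qf (\<sigma> t) x)"
proof (rule ccontr)
  assume "\<not> ?thesis"
  then have "Re (qf (\<sigma> t) x) \<le> 0"
    by simp
  moreover have cont: "continuous_on {0..} \<sigma>"
    unfolding continuous_on_eq_continuous_within using deriv has_vector_derivative_continuous by blast
  ultimately obtain s y where s: "0 \<le> s" and y: "norm y = 1" "Re (qf (\<sigma> s) y) \<le> 0"
    and before: "\<And>\<tau> z. 0 \<le> \<tau> \<Longrightarrow> \<tau> < s \<Longrightarrow> z \<noteq> 0 \<Longrightarrow> 0 < Re (qf (\<sigma> \<tau>) z)"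
    using first_nonpositive_time \<open>0 \<le> t\<close> \<open>x \<noteq> 0\<close> by blast
  have "y \<noteq> 0"
    using y(1) by auto
  then have "0 < s"
    using s y(2) \<sigma>0[of y] by (cases "s = 0") auto
  then have "psd (\<sigma> s)"
    using psd_if_positive_before[OF cont _ sa[OF s] before] by blast
  moreover from this have "Re (qf (\<sigma> s) y) = 0"
    using y(2) by (simp add: psd_iff_qf order_antisym)
  ultimately have "0 < Re (qf (F (\<sigma> s) + P s) y)"
    using tangent psd_kernel P[OF s \<open>y \<noteq> 0\<close>] by (fastforce simp: qf_add)
  moreover have "((\<lambda>\<tau>. Re (qf (\<sigma> \<tau>) y)) has_real_derivative Re (qf (F (\<sigma> s) + P s) y)) (at s)"
    using bounded_linear.has_vector_derivative[OF bounded_linear_Re_qf deriv[OF s]]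
    by (simp add: has_real_derivative_iff_has_vector_derivative at_within_nonneg[OF \<open>0 < s\<close>])
  ultimately obtain d where d: "0 < d" "\<And>h. 0 < h \<Longrightarrow> h < d \<Longrightarrow> Re (qf (\<sigma> (s - h)) y) < Re (qf (\<sigma> s) y)"
    using DERIV_pos_inc_left by blast
  define h where "h = min d s / 2"
  have "0 < h" "h < d" "h \<le> s"
    using d(1) \<open>0 < s\<close> by (auto simp: h_def)
  then show False
    using d(2)[of h] before[of "s - h" y] y(2) \<open>y \<noteq> 0\<close> by simp
qed

lemma qf_perturbed_positive:
  fixes \<rho> :: "real \<Rightarrow> 'n::finite cmat" and F :: "'n cmat \<Rightarrow> 'n cmat"
  assumes F: "linear F"
    and tangent: "\<And>S y. psd S \<Longrightarrow> S *v y = 0 \<Longrightarrow> 0 \<le> Re (qf (F S) y)"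
    and sa: "\<And>t. 0 \<le> t \<Longrightarrow> self_adjoint (\<rho> t)"
    and deriv: "\<And>t. 0 \<le> t \<Longrightarrow> (\<rho> has_vector_derivative F (\<rho> t)) (at t within {0..})"
    and "psd (\<rho> 0)"
    and C: "\<And>x. Re (qf (F (mat 1)) x) \<le> C * (norm x)\<^sup>2" and "C < a"
    and "0 < \<epsilon>" "0 \<le> t" "x \<noteq> 0"
  shows "0 < Re (qf (\<rho> t) x) + \<epsilon> * exp (a * t) * (norm x)\<^sup>2"
proof -
  define \<sigma> where "\<sigma> = (\<lambda>\<tau>. \<rho> \<tau> + (\<epsilon> * exp (a * \<tau>)) *\<^sub>R mat 1)"
  define P where "P = (\<lambda>\<tau>. (\<epsilon> * exp (a * \<tau>)) *\<^sub>R (a *\<^sub>R mat 1 - F (mat 1)))"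
  have "0 < Re (qf (\<sigma> t) x)"
  proof (rule qf_positive_preserved[where F = F and P = P])
    show "self_adjoint (\<sigma> \<tau>)" if "0 \<le> \<tau>" for \<tau>
      using sa[OF that] by (simp add: \<sigma>_def self_adjoint_def cadj_add cadj_scaleR cadj_mat)
    show "(\<sigma> has_vector_derivative F (\<sigma> \<tau>) + P \<tau>) (at \<tau> within {0..})" if "0 \<le> \<tau>" for \<tau>
    proof -
      have "((\<lambda>\<tau>. (\<epsilon> * exp (a * \<tau>)) *\<^sub>R (mat 1 :: 'n cmat)) has_vector_derivative
          (\<epsilon> * exp (a * \<tau>) * a) *\<^sub>R mat 1) (at \<tau> within {0..})"
        by (auto intro!: derivative_eq_intros)
      then have "(\<sigma> has_vector_derivative F (\<rho> \<tau>) + (\<epsilon> * exp (a * \<tau>) * a) *\<^sub>R mat 1)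
          (at \<tau> within {0..})"
        unfolding \<sigma>_def by (rule has_vector_derivative_add[OF deriv[OF that]])
      moreover have "F (\<sigma> \<tau>) + P \<tau> = F (\<rho> \<tau>) + (\<epsilon> * exp (a * \<tau>) * a) *\<^sub>R mat 1"
        by (simp add: \<sigma>_def P_def linear_add[OF F] linear_scale[OF F] algebra_simps)
      ultimately show ?thesis
        by simp
    qed
    show "0 < Re (qf (P \<tau>) z)" if "0 \<le> \<tau>" "z \<noteq> 0" for \<tau> z
    proof -
      have "0 < (a - C) * (norm z)\<^sup>2"
        using that \<open>C < a\<close> by simp
      then have "0 < a * (norm z)\<^sup>2 - Re (qf (F (mat 1)) z)"
        using C[of z] by (simp add: algebra_simps)
      then show ?thesis
        using \<open>0 < \<epsilon>\<close> by (simp add: P_def qf_scaleR qf_diff qf_mat)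
    qed
    show "0 < Re (qf (\<sigma> 0) z)" if "z \<noteq> 0" for z
      using \<open>psd (\<rho> 0)\<close> \<open>0 < \<epsilon>\<close> that
      by (simp add: \<sigma>_def qf_add qf_scaleR qf_mat psd_iff_qf add_nonneg_pos)
  qed (use tangent \<open>0 \<le> t\<close> \<open>x \<noteq> 0\<close> in auto)
  then show ?thesis
    by (simp add: \<sigma>_def qf_add qf_scaleR qf_mat)
qed

(* The perturbation eps exp(a t) I, with a dominating the form of F I, turns the tangency
   condition into the strict one of qf_positive_preserved; then eps goes to 0. *)
lemma psd_preserved:
  fixes \<rho> :: "real \<Rightarrow> 'n::finite cmat" and F :: "'n cmat \<Rightarrow> 'n cmat"
  assumes F: "linear F"
    and tangent: "\<And>S y. psd S \<Longrightarrow> S *v y = 0 \<Longrightarrow> 0 \<le> Re (qf (F S) y)"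
    and sa: "\<And>t. 0 \<le> t \<Longrightarrow> self_adjoint (\<rho> t)"
    and deriv: "\<And>t. 0 \<le> t \<Longrightarrow> (\<rho> has_vector_derivative F (\<rho> t)) (at t within {0..})"
    and "psd (\<rho> 0)" and "0 \<le> t"
  shows "psd (\<rho> t)"
proof -
  obtain C where "\<And>x. cmod (qf (F (mat 1)) x) \<le> C * (norm x)\<^sup>2"
    using norm_qf_le by blast
  then have C: "Re (qf (F (mat 1)) x) \<le> C * (norm x)\<^sup>2" for x
    using complex_Re_le_cmod order_trans by blast
  have "0 \<le> Re (qf (\<rho> t) x) + e" if "0 < e" "x \<noteq> 0" for e x
  proof -
    define \<epsilon> where "\<epsilon> = e / (exp ((C + 1) * t) * (norm x)\<^sup>2)"
    have "0 < \<epsilon>"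
      using that by (simp add: \<epsilon>_def)
    have "C < C + 1"
      by simp
    from qf_perturbed_positive[OF F tangent sa deriv \<open>psd (\<rho> 0)\<close> C this \<open>0 < \<epsilon>\<close> \<open>0 \<le> t\<close> \<open>x \<noteq> 0\<close>]
    show ?thesis
      using that by (simp add: \<epsilon>_def)
  qed
  then have "0 \<le> Re (qf (\<rho> t) x)" for x
    by (cases "x = 0") (auto simp: qf_def intro: field_le_epsilon[where x = 0, simplified])
  then show ?thesis
    using sa[OF \<open>0 \<le> t\<close>] by (simp add: psd_iff_qf)
qed

section \<open>The Lindblad generator\<close>


definition dissipator :: "'n::finite cmat \<Rightarrow> 'n cmat \<Rightarrow> 'n cmat" where
  "dissipator L A = L ** A ** cadj L - (1/2) *\<^sub>m (cadj L ** L ** A) - (1/2) *\<^sub>m (A ** cadj L ** L)"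

definition heisenberg :: "'n::finite cmat \<Rightarrow> (nat \<Rightarrow> 'n cmat) \<Rightarrow> nat \<Rightarrow> 'n cmat \<Rightarrow> 'n cmat" where
  "heisenberg H L N X = \<i> *\<^sub>m comm H X + (\<Sum>k\<in>{1..N}. gen (L k) X)"

lemma lindblad_eq_dissipator:
  "lindblad H L N A = - (\<i> *\<^sub>m comm H A) + (\<Sum>k\<in>{1..N}. dissipator (L k) A)"
  by (simp add: lindblad_def dissipator_def)

lemma linear_lindblad: "linear (lindblad H L N)"
proof -
  have "linear (\<lambda>A. comm H A)" "linear (\<lambda>A. dissipator L A)" for L
    by (rule linearI; simp add: comm_def dissipator_def matrix_add_ldistrib matrix_add_rdistrib
          matrix_scalar_ac scalar_matrix_assoc[symmetric] mscale_add mscale_scaleR algebra_simps)+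
  then show ?thesis
    unfolding lindblad_eq_dissipator
    by (intro linear_compose_add linear_compose_neg linear_compose_sum)
      (auto intro: linearI simp: mscale_add mscale_scaleR linear_add linear_scale)
qed

lemma cadj_lindblad:
  assumes "self_adjoint H"
  shows "cadj (lindblad H L N A) = lindblad H L N (cadj A)"
proof -
  have "cadj (comm H A) = - comm H (cadj A)"
    using assms by (simp add: comm_def cadj_diff cadj_matrix_mul self_adjoint_def)
  moreover have "cadj (dissipator L A) = dissipator L (cadj A)" for L
    by (simp add: dissipator_def cadj_diff cadj_matrix_mul cadj_mscale matrix_mul_assoc)
  ultimately show ?thesis
    by (simp add: lindblad_eq_dissipator cadj_add cadj_minus cadj_mscale cadj_sum mscale_def
        vec_eq_iff)
qed

lemma mtrace_mult_dissipator: "mtrace (X ** dissipator L A) = mtrace (gen L X ** A)"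
proof -
  have "mtrace (X ** (L ** A ** cadj L)) = mtrace (cadj L ** X ** L ** A)"
    using mtrace_commute[of "X ** L ** A" "cadj L"] by (simp add: matrix_mul_assoc)
  moreover have "mtrace (X ** (A ** cadj L ** L)) = mtrace (cadj L ** L ** X ** A)"
    using mtrace_commute[of "X ** A" "cadj L ** L"] by (simp add: matrix_mul_assoc)
  ultimately show ?thesis
    by (simp add: dissipator_def gen_def matrix_diff_ldistrib matrix_diff_rdistrib
        mscale_matrix_mul_left mscale_matrix_mul_right mtrace_diff mtrace_mscale matrix_mul_assoc)
qed

lemma mtrace_mult_lindblad: "mtrace (X ** lindblad H L N A) = mtrace (heisenberg H L N X ** A)"
proof -
  have "mtrace (X ** A ** H) = mtrace (H ** X ** A)"
    using mtrace_commute[of "X ** A" H] by (simp add: matrix_mul_assoc)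
  then have "mtrace (X ** (- (\<i> *\<^sub>m comm H A))) = mtrace ((\<i> *\<^sub>m comm H X) ** A)"
    by (simp add: comm_def matrix_mul_minus_right matrix_diff_ldistrib matrix_diff_rdistrib
        mscale_matrix_mul_left mscale_matrix_mul_right mtrace_minus mtrace_diff mtrace_mscale
        matrix_mul_assoc algebra_simps)
  then show ?thesis
    by (simp only: lindblad_eq_dissipator heisenberg_def matrix_add_ldistrib matrix_add_rdistrib
        matrix_mul_sum_right matrix_mul_sum_left mtrace_add mtrace_sum mtrace_mult_dissipator)
qed

lemma mtrace_lindblad: "mtrace (lindblad H L N A) = 0"
proof -
  have "heisenberg H L N (mat 1) = 0"
    by (simp add: heisenberg_def comm_def gen_def vec_eq_iff)
  then show ?thesis
    using mtrace_mult_lindblad[of "mat 1" H L N A] by simp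
qed

lemma mtrace_lindblad_has_vector_derivative:
  assumes "(\<rho> has_vector_derivative lindblad H L N (\<rho> t)) F"
  shows "((\<lambda>t. mtrace (X ** \<rho> t)) has_vector_derivative mtrace (heisenberg H L N X ** \<rho> t)) F"
  using bounded_linear.has_vector_derivative[OF bounded_linear_mtrace_mult_left assms]
  by (simp add: mtrace_mult_lindblad)

lemma lindblad_tangent:
  assumes S: "psd S" and y: "S *v y = 0"
  shows "0 \<le> Re (qf (lindblad H L N S) y)"
proof -
  have S_adj: "cadj S *v y = 0"
    using S y by (simp add: psd_cadj)
  have "qf (comm H S) y = 0"
    by (simp add: comm_def qf_diff qf_matrix_mul y S_adj)
  moreover have "0 \<le> Re (qf (dissipator M S) y)" for M
  proof -
    have "qf (cadj M ** M ** S) y = 0" "qf (S ** (cadj M ** M)) y = 0"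
      by (simp_all add: qf_matrix_mul y S_adj)
    moreover have "qf (M ** S ** cadj M) y = qf S (cadj M *v y)"
      using qf_sandwich[of "cadj M" S y] by simp
    ultimately show ?thesis
      using S by (simp add: dissipator_def qf_diff qf_mscale psd_iff_qf matrix_mul_assoc)
  qed
  ultimately show ?thesis
    unfolding lindblad_eq_dissipator qf_add qf_minus qf_mscale qf_sum
    by (simp add: sum_nonneg)
qed

lemma lindblad_density_state:
  fixes \<rho> :: "real \<Rightarrow> 'n::finite cmat"
  assumes H: "self_adjoint H"
    and \<rho>: "\<And>t. 0 \<le> t \<Longrightarrow> (\<rho> has_vector_derivative lindblad H L N (\<rho> t)) (at t within {0..})"
    and \<rho>0: "density_state (\<rho> 0)" and "0 \<le> t"
  shows "density_state (\<rho> t)"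
proof -
  have bounded: "bounded_linear (lindblad H L N)"
    using linear_lindblad linear_conv_bounded_linear by blast
  have self_adjoint: "self_adjoint (\<rho> s)" if "0 \<le> s" for s
  proof -
    have "(\<lambda>s. \<rho> s - cadj (\<rho> s)) s = 0"
    proof (rule linear_ode_zero[OF bounded _ _ that])
      show "((\<lambda>s. \<rho> s - cadj (\<rho> s)) has_vector_derivative
          lindblad H L N (\<rho> s - cadj (\<rho> s))) (at s within {0..})" if "0 \<le> s" for s
        using has_vector_derivative_diff[OF \<rho>[OF that]
            bounded_linear.has_vector_derivative[OF bounded_linear_cadj \<rho>[OF that]]]
        by (simp add: linear_diff[OF linear_lindblad] cadj_lindblad[OF H])
      show "\<rho> 0 - cadj (\<rho> 0) = 0"
        using \<rho>0 by (simp add: density_state_def psd_cadj)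
    qed
    then show ?thesis
      by (simp add: self_adjoint_def)
  qed
  have "psd (\<rho> t)"
    using psd_preserved[OF linear_lindblad lindblad_tangent self_adjoint \<rho>] \<rho>0 \<open>0 \<le> t\<close>
    by (simp add: density_state_def)
  moreover obtain c where "\<And>s. s \<in> {0..} \<Longrightarrow> mtrace (\<rho> s) = c"
  proof (rule has_vector_derivative_zero_constant[of "{0..}"])
    show "((\<lambda>s. mtrace (\<rho> s)) has_vector_derivative 0) (at s within {0..})" if "s \<in> {0..}" for s
      using bounded_linear.has_vector_derivative[OF bounded_linear_mtrace_mult_left[of "mat 1"] \<rho>] that
      by (simp add: mtrace_lindblad)
  qed auto
  then have "mtrace (\<rho> t) = mtrace (\<rho> 0)"
    using \<open>0 \<le> t\<close> by simp
  ultimately show ?thesis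
    using \<rho>0 by (simp add: density_state_def)
qed

lemma gen_eq_0_if_commute:
  fixes U W X :: "'n::finite cmat"
  assumes U: "cadj U ** U = mat 1" and UX: "U ** X = X ** U" and WX: "W ** X = X ** W"
    and W: "self_adjoint W"
  shows "gen (U ** W) X = 0"
proof -
  have "cadj U ** X ** U = X"
    by (metis UX U matrix_mul_assoc matrix_mul_lid)
  then have "cadj (U ** W) ** X ** (U ** W) = X ** (W ** W)"
    using W WX by (simp add: cadj_matrix_mul self_adjoint_def matrix_mul_assoc)
      (metis matrix_mul_assoc)
  moreover have "cadj (U ** W) ** (U ** W) = W ** W"
    using W U by (simp add: cadj_matrix_mul self_adjoint_def matrix_mul_assoc)
      (metis matrix_mul_assoc matrix_mul_lid)
  moreover have "(W ** W) ** X = X ** (W ** W)"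
    by (metis WX matrix_mul_assoc)
  ultimately show ?thesis
    unfolding gen_def mscale_half
    by (simp add: matrix_mul_assoc[symmetric] flip: scaleR_add_left)
qed

lemma gen_square: "gen L (X ** X) = X ** gen L X + gen L X ** X + diss L (X::'n::finite cmat)"
proof -
  have "2 *\<^sub>R gen L (X ** X) = 2 *\<^sub>R (X ** gen L X + gen L X ** X + diss L X)"
    unfolding gen_def diss_def comm_def mscale_half
    by (simp add: matrix_diff_ldistrib matrix_diff_rdistrib matrix_add_ldistrib matrix_add_rdistrib
        matrix_mul_assoc matrix_scalar_ac scalar_matrix_assoc[symmetric] scaleR_diff_right
        scaleR_add_right scaleR_2 algebra_simps)
  then show ?thesis
    by simp
qed

lemma heisenberg_eq_gen:
  assumes "comm H X = 0" and l: "l \<in> {1..N}"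
    and "\<And>k. k \<in> {1..N} \<Longrightarrow> k \<noteq> l \<Longrightarrow> gen (L k) X = 0"
  shows "heisenberg H L N X = gen (L l) X"
proof -
  have "(\<Sum>k\<in>{1..N}. gen (L k) X) = gen (L l) X + (\<Sum>k\<in>{1..N} - {l}. gen (L k) X)"
    using l by (simp add: sum.remove)
  also have "(\<Sum>k\<in>{1..N} - {l}. gen (L k) X) = 0"
    using assms(3) by (simp add: sum.neutral)
  finally show ?thesis
    using assms(1) by (simp add: heisenberg_def)
qed

section \<open>Decay of a single channel\<close>

lemma exponential_decay_tendsto_0:
  fixes f f' :: "real \<Rightarrow> real"
  assumes f: "\<And>t. 0 \<le> t \<Longrightarrow> (f has_real_derivative f' t) (at t within {0..})"
    and nonneg: "\<And>t. 0 \<le> t \<Longrightarrow> 0 \<le> f t"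
    and decay: "\<And>t. 0 \<le> t \<Longrightarrow> f' t \<le> - c * f t" and "0 < c"
  shows "(f \<longlongrightarrow> 0) at_top"
proof (rule tendsto_sandwich)
  have scaled: "exp (c * t) * f t \<le> exp (c * 0) * f 0" if "0 \<le> t" for t
  proof (rule nonincreasing_if_derivative_nonpos[OF _ _ order_refl that])
    show "((\<lambda>t. exp (c * t) * f t) has_real_derivative exp (c * t) * (c * f t + f' t))
        (at t within {0..})" if "0 \<le> t" for t
      using f[OF that] by (auto intro!: derivative_eq_intros simp: algebra_simps)
    show "exp (c * t) * (c * f t + f' t) \<le> 0" if "0 \<le> t" for t
      using decay[OF that] by (simp add: mult_nonneg_nonpos)
  qed
  have bound: "f t \<le> f 0 * exp (- c * t)" if "0 \<le> t" for t
    using scaled[OF that] by (simp add: exp_minus field_simps)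
  show "\<forall>\<^sub>F t in at_top. f t \<le> f 0 * exp (- c * t)"
    using eventually_ge_at_top[of 0] by eventually_elim (rule bound)
  show "\<forall>\<^sub>F t in at_top. 0 \<le> f t"
    using eventually_ge_at_top[of 0] by eventually_elim (rule nonneg)
  have "((\<lambda>t. exp (- c * t)) \<longlongrightarrow> 0) at_top"
    by (rule filterlim_compose[OF exp_at_bot filterlim_tendsto_neg_mult_at_bot[OF tendsto_const _ filterlim_ident]])
      (use \<open>0 < c\<close> in simp)
  then show "((\<lambda>t. f 0 * exp (- c * t)) \<longlongrightarrow> 0) at_top"
    by (rule tendsto_mult_right_zero)
qed (rule tendsto_const)

lemma two_sqrt_le: "0 < \<eta> \<Longrightarrow> 0 \<le> x \<Longrightarrow> 2 * sqrt x \<le> \<eta> + x / (\<eta>::real)"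
  using arith_geo_mean_sqrt[of \<eta> "x / \<eta>"] by simp

lemma tendsto_0_if_nonincreasing:
  fixes f f' :: "real \<Rightarrow> real"
  assumes f: "\<And>t. 0 \<le> t \<Longrightarrow> (f has_real_derivative f' t) (at t within {0..})"
    and nonincreasing: "\<And>t. 0 \<le> t \<Longrightarrow> f' t \<le> 0" and nonneg: "\<And>t. 0 \<le> t \<Longrightarrow> 0 \<le> f t"
    and small: "\<And>e. 0 < e \<Longrightarrow> \<exists>t\<ge>0. f t < e"
  shows "(f \<longlongrightarrow> 0) at_top"
proof (rule order_tendstoI)
  show "\<forall>\<^sub>F t in at_top. a < f t" if "a < 0" for a
    using eventually_ge_at_top[of 0] by eventually_elim (use nonneg that in force)
  show "\<forall>\<^sub>F t in at_top. f t < a" if a: "0 < a" for a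
  proof -
    obtain t0 where t0: "0 \<le> t0" "f t0 < a"
      using small[OF a] by blast
    have "f t < a" if "t0 \<le> t" for t
      using nonincreasing_if_derivative_nonpos[OF f nonincreasing t0(1) that] t0(2) by linarith
    then show ?thesis
      unfolding eventually_at_top_linorder by blast
  qed
qed

lemma dissipative_linear_growth:
  fixes f f' g g' :: "real \<Rightarrow> real"
  assumes f: "\<And>t. 0 \<le> t \<Longrightarrow> (f has_real_derivative f' t) (at t within {0..})"
    and nonincreasing: "\<And>t. 0 \<le> t \<Longrightarrow> f' t \<le> 0"
    and g: "\<And>t. 0 \<le> t \<Longrightarrow> (g has_real_derivative g' t) (at t within {0..})"
    and growth: "\<And>t. 0 \<le> t \<Longrightarrow> c * f t \<le> g' t + 2 * sqrt (K * - f' t)"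
    and "0 \<le> K" "0 < \<eta>" and large: "\<And>t. 0 \<le> t \<Longrightarrow> 2 * \<eta> \<le> c * f t" and "0 \<le> t"
  shows "g 0 - (K / \<eta>) * f 0 + \<eta> * t \<le> g t - (K / \<eta>) * f t"
proof -
  define h where "h t = (K / \<eta>) * f t + \<eta> * t - g t" for t
  have "h t \<le> h 0"
  proof (rule nonincreasing_if_derivative_nonpos[OF _ _ order_refl \<open>0 \<le> t\<close>])
    show "(h has_real_derivative (K / \<eta>) * f' t + \<eta> - g' t) (at t within {0..})" if "0 \<le> t" for t
      unfolding h_def using f[OF that] g[OF that] \<open>0 < \<eta>\<close> by (auto intro!: derivative_eq_intros)
    show "(K / \<eta>) * f' t + \<eta> - g' t \<le> 0" if "0 \<le> t" for t
    proof -
      have "2 * sqrt (K * - f' t) \<le> \<eta> + K * - f' t / \<eta>"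
        using \<open>0 \<le> K\<close> nonincreasing[OF that]
        by (intro two_sqrt_le[OF \<open>0 < \<eta>\<close>]) (simp add: mult_nonneg_nonpos)
      then show ?thesis
        using growth[OF that] large[OF that] by (simp add: field_simps)
    qed
  qed
  then show ?thesis
    by (simp add: h_def)
qed

(* If f stayed above e, g would grow linearly by dissipative_linear_growth, although it is bounded. *)
lemma dissipative_eventually_small:
  fixes f f' g g' :: "real \<Rightarrow> real"
  assumes f: "\<And>t. 0 \<le> t \<Longrightarrow> (f has_real_derivative f' t) (at t within {0..})"
    and nonneg: "\<And>t. 0 \<le> t \<Longrightarrow> 0 \<le> f t"
    and nonincreasing: "\<And>t. 0 \<le> t \<Longrightarrow> f' t \<le> 0"
    and g: "\<And>t. 0 \<le> t \<Longrightarrow> (g has_real_derivative g' t) (at t within {0..})"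
    and g_bounded: "\<And>t. 0 \<le> t \<Longrightarrow> \<bar>g t\<bar> \<le> B"
    and growth: "\<And>t. 0 \<le> t \<Longrightarrow> c * f t \<le> g' t + 2 * sqrt (K * - f' t)"
    and "0 < c" "0 \<le> K" "0 < e"
  shows "\<exists>t\<ge>0. f t < e"
proof (rule ccontr)
  define \<eta> where "\<eta> = c * e / 2"
  assume "\<not> (\<exists>t\<ge>0. f t < e)"
  then have large: "2 * \<eta> \<le> c * f t" if "0 \<le> t" for t
    using that \<open>0 < c\<close> by (simp add: \<eta>_def not_less)
  have "0 < \<eta>"
    using \<open>0 < c\<close> \<open>0 < e\<close> by (simp add: \<eta>_def)
  define T where "T = (2 * B + (K / \<eta>) * f 0 + 1) / \<eta>"
  have "0 \<le> T"
    using g_bounded[of 0] \<open>0 \<le> K\<close> \<open>0 < \<eta>\<close> nonneg[of 0] by (simp add: T_def)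
  have "0 \<le> (K / \<eta>) * f T"
    using nonneg[OF \<open>0 \<le> T\<close>] \<open>0 \<le> K\<close> \<open>0 < \<eta>\<close> by simp
  then have "g 0 - (K / \<eta>) * f 0 + \<eta> * T \<le> B"
    using dissipative_linear_growth[OF f nonincreasing g growth \<open>0 \<le> K\<close> \<open>0 < \<eta>\<close> large \<open>0 \<le> T\<close>]
      abs_le_D1[OF g_bounded[OF \<open>0 \<le> T\<close>]] by linarith
  moreover have "\<eta> * T = 2 * B + (K / \<eta>) * f 0 + 1"
    using \<open>0 < \<eta>\<close> by (simp add: T_def)
  ultimately show False
    using g_bounded[of 0] by (simp add: abs_le_iff)
qed

lemma Re_mtrace_square_rate_ge:
  fixes W G D \<rho> :: "'n::finite cmat"
  assumes W: "psd W" and \<rho>: "psd \<rho>" and G: "loewner_le G 0"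
    and D: "loewner_le (complex_of_real c *\<^sub>m W) D"
    and K: "Re (mtrace (W ** (- G) ** W ** \<rho>)) \<le> K"
  shows "c * Re (mtrace (W ** \<rho>))
    \<le> Re (mtrace ((W ** G + G ** W + D) ** \<rho>)) + 2 * sqrt (K * - Re (mtrace (G ** \<rho>)))"
proof -
  define x where "x = Re (mtrace (W ** G ** \<rho>))"
  have "psd (- G)"
    using G by (simp add: loewner_le_def)
  then have Wsa: "self_adjoint W" and Gsa: "self_adjoint G"
    using W by (auto simp: psd_def self_adjoint_def cadj_minus)
  have "Re (mtrace ((W ** G + G ** W + D) ** \<rho>)) = 2 * x + Re (mtrace (D ** \<rho>))"
    using Re_mtrace_swap[OF Gsa Wsa psd_self_adjoint[OF \<rho>]]
    by (simp add: x_def matrix_add_rdistrib mtrace_add)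
  moreover have "c * Re (mtrace (W ** \<rho>)) \<le> Re (mtrace (D ** \<rho>))"
    using Re_mtrace_mono[OF D \<rho>] by (simp add: mscale_matrix_mul_left mtrace_mscale)
  moreover have "x\<^sup>2 \<le> K * - Re (mtrace (G ** \<rho>))"
  proof -
    have "x\<^sup>2 \<le> Re (mtrace (W ** (- G) ** W ** \<rho>)) * Re (mtrace ((- G) ** \<rho>))"
      using Re_mtrace_square_le[OF \<open>psd (- G)\<close> \<rho> Wsa]
      by (simp add: x_def matrix_mul_minus_left matrix_mul_minus_right mtrace_minus)
    also have "\<dots> \<le> K * Re (mtrace ((- G) ** \<rho>))"
      using K mtrace_mult_psd(1)[OF \<open>psd (- G)\<close> \<rho>] by (rule mult_right_mono)
    finally show ?thesis
      by (simp add: matrix_mul_minus_left mtrace_minus)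
  qed
  then have "- x \<le> sqrt (K * - Re (mtrace (G ** \<rho>)))"
    by (simp add: real_le_rsqrt)
  ultimately show ?thesis
    by linarith
qed

lemma Re_mtrace_tendsto_0_contracting:
  fixes \<rho> :: "real \<Rightarrow> 'n::finite cmat" and W G :: "'n cmat"
  assumes \<rho>: "\<And>t. 0 \<le> t \<Longrightarrow> density_state (\<rho> t)" and W: "psd W"
    and dW: "\<And>t. 0 \<le> t \<Longrightarrow> ((\<lambda>t. mtrace (W ** \<rho> t)) has_vector_derivative mtrace (G ** \<rho> t))
      (at t within {0..})"
    and G: "loewner_le G (- (complex_of_real c *\<^sub>m W))" and "0 < c"
  shows "((\<lambda>t. Re (mtrace (W ** \<rho> t))) \<longlongrightarrow> 0) at_top"
proof (rule exponential_decay_tendsto_0[OF has_field_derivative_Re[OF dW] _ _ \<open>0 < c\<close>])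
  fix t :: real assume "0 \<le> t"
  then have "psd (\<rho> t)"
    using \<rho> by (simp add: density_state_def)
  then show "0 \<le> Re (mtrace (W ** \<rho> t))"
    by (rule mtrace_mult_psd(1)[OF W])
  show "Re (mtrace (G ** \<rho> t)) \<le> - c * Re (mtrace (W ** \<rho> t))"
    using Re_mtrace_mono[OF G \<open>psd (\<rho> t)\<close>]
    by (simp add: matrix_mul_minus_left mtrace_minus mscale_matrix_mul_left mtrace_mscale)
qed

lemma Re_mtrace_tendsto_0_dissipative:
  fixes \<rho> :: "real \<Rightarrow> 'n::finite cmat" and W G D :: "'n cmat"
  assumes \<rho>: "\<And>t. 0 \<le> t \<Longrightarrow> density_state (\<rho> t)" and W: "psd W"
    and dW: "\<And>t. 0 \<le> t \<Longrightarrow> ((\<lambda>t. mtrace (W ** \<rho> t)) has_vector_derivative mtrace (G ** \<rho> t))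
      (at t within {0..})"
    and dWW: "\<And>t. 0 \<le> t \<Longrightarrow> ((\<lambda>t. mtrace ((W ** W) ** \<rho> t)) has_vector_derivative
      mtrace ((W ** G + G ** W + D) ** \<rho> t)) (at t within {0..})"
    and G: "loewner_le G 0" and D: "loewner_le (complex_of_real c *\<^sub>m W) D" and "0 < c"
  shows "((\<lambda>t. Re (mtrace (W ** \<rho> t))) \<longlongrightarrow> 0) at_top"
proof -
  have \<rho>_psd: "psd (\<rho> t)" if "0 \<le> t" for t
    using \<rho>[OF that] by (simp add: density_state_def)
  note df = has_field_derivative_Re[OF dW]
  have f_nonneg: "0 \<le> Re (mtrace (W ** \<rho> t))" if "0 \<le> t" for t
    by (rule mtrace_mult_psd(1)[OF W \<rho>_psd[OF that]])
  have f'_nonpos: "Re (mtrace (G ** \<rho> t)) \<le> 0" if "0 \<le> t" for t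
    using Re_mtrace_mono[OF G \<rho>_psd[OF that]] by simp
  obtain B where B: "\<And>\<sigma>. density_state \<sigma> \<Longrightarrow> cmod (mtrace ((W ** W) ** \<sigma>)) \<le> B"
    using mtrace_density_bounded by blast
  obtain K where K: "\<And>\<sigma>. density_state \<sigma> \<Longrightarrow> cmod (mtrace ((W ** (- G) ** W) ** \<sigma>)) \<le> K"
    using mtrace_density_bounded by blast
  have "0 \<le> K"
    using K[OF \<rho>[of 0]] norm_ge_zero order_trans by blast
  have "\<exists>t\<ge>0. Re (mtrace (W ** \<rho> t)) < e" if "0 < e" for e
  proof (rule dissipative_eventually_small[OF df f_nonneg f'_nonpos has_field_derivative_Re[OF dWW]
        _ _ \<open>0 < c\<close> \<open>0 \<le> K\<close> that])
    show "\<bar>Re (mtrace ((W ** W) ** \<rho> t))\<bar> \<le> B" if "0 \<le> t" for t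
      using B[OF \<rho>[OF that]] abs_Re_le_cmod order_trans by blast
    show "c * Re (mtrace (W ** \<rho> t)) \<le> Re (mtrace ((W ** G + G ** W + D) ** \<rho> t))
        + 2 * sqrt (K * - Re (mtrace (G ** \<rho> t)))" if "0 \<le> t" for t
    proof (rule Re_mtrace_square_rate_ge[OF W \<rho>_psd[OF that] G D])
      show "Re (mtrace (W ** (- G) ** W ** \<rho> t)) \<le> K"
        using K[OF \<rho>[OF that]] abs_Re_le_cmod abs_ge_self order_trans by metis
    qed
  qed
  with df f'_nonpos f_nonneg show ?thesis
    by (rule tendsto_0_if_nonincreasing)
qed

lemma mtrace_tendsto_0_single_channel:
  fixes \<rho> :: "real \<Rightarrow> 'n::finite cmat" and W G D :: "'n cmat"
  assumes \<rho>: "\<And>t. 0 \<le> t \<Longrightarrow> density_state (\<rho> t)" and W: "psd W"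
    and dW: "\<And>t. 0 \<le> t \<Longrightarrow> ((\<lambda>t. mtrace (W ** \<rho> t)) has_vector_derivative mtrace (G ** \<rho> t))
      (at t within {0..})"
    and dWW: "\<And>t. 0 \<le> t \<Longrightarrow> ((\<lambda>t. mtrace ((W ** W) ** \<rho> t)) has_vector_derivative
      mtrace ((W ** G + G ** W + D) ** \<rho> t)) (at t within {0..})"
    and cond: "(\<exists>c>0. loewner_le G (- (complex_of_real c *\<^sub>m W)))
      \<or> (loewner_le G 0 \<and> (\<exists>c>0. loewner_le (complex_of_real c *\<^sub>m W) D))"
  shows "((\<lambda>t. mtrace (W ** \<rho> t)) \<longlongrightarrow> 0) at_top"
proof -
  have "((\<lambda>t. Re (mtrace (W ** \<rho> t))) \<longlongrightarrow> 0) at_top"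
    using cond Re_mtrace_tendsto_0_contracting[OF \<rho> W dW] Re_mtrace_tendsto_0_dissipative[OF \<rho> W dW dWW]
    by blast
  then have "((\<lambda>t. complex_of_real (Re (mtrace (W ** \<rho> t)))) \<longlongrightarrow> 0) at_top"
    using tendsto_of_real by fastforce
  moreover have "\<forall>\<^sub>F t in at_top. complex_of_real (Re (mtrace (W ** \<rho> t))) = mtrace (W ** \<rho> t)"
    using eventually_ge_at_top[of 0]
  proof eventually_elim
    case (elim t)
    then show ?case
      using mtrace_mult_psd(2)[OF W] \<rho>[OF elim] by (simp add: complex_eq_iff density_state_def)
  qed
  ultimately show ?thesis
    by (rule Lim_transform_eventually)
qed

lemma mtrace_tendsto_0_commuting_channel:
  fixes \<rho> :: "real \<Rightarrow> 'n::finite cmat" and W U :: "nat \<Rightarrow> 'n cmat"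
  assumes \<rho>: "\<And>t. 0 \<le> t \<Longrightarrow>
      (\<rho> has_vector_derivative lindblad H (\<lambda>k. U k ** W k) N (\<rho> t)) (at t within {0..})"
    and dens: "\<And>t. 0 \<le> t \<Longrightarrow> density_state (\<rho> t)"
    and l: "l \<in> {1..N}" and W: "psd (W l)" and HW: "comm H (W l) = 0"
    and others: "\<And>k. k \<in> {1..N} \<Longrightarrow> k \<noteq> l \<Longrightarrow>
      unitary (U k) \<and> self_adjoint (W k) \<and> U k ** W l = W l ** U k \<and> W k ** W l = W l ** W k"
    and cond: "(\<exists>c>0. loewner_le (gen (U l ** W l) (W l)) (- (complex_of_real c *\<^sub>m W l)))
      \<or> (loewner_le (gen (U l ** W l) (W l)) 0 \<and>
         (\<exists>c>0. loewner_le (complex_of_real c *\<^sub>m W l) (diss (U l ** W l) (W l))))"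
  shows "((\<lambda>t. mtrace (W l ** \<rho> t)) \<longlongrightarrow> 0) at_top"
proof (rule mtrace_tendsto_0_single_channel[OF dens W _ _ cond])
  have single: "heisenberg H (\<lambda>k. U k ** W k) N X = gen (U l ** W l) X"
    if "comm H X = 0" and "\<And>k. k \<in> {1..N} \<Longrightarrow> k \<noteq> l \<Longrightarrow> U k ** X = X ** U k \<and> W k ** X = X ** W k"
    for X
    using that others by (intro heisenberg_eq_gen[OF _ l] gen_eq_0_if_commute) (auto simp: unitary_def)
  show "((\<lambda>t. mtrace (W l ** \<rho> t)) has_vector_derivative mtrace (gen (U l ** W l) (W l) ** \<rho> t))
      (at t within {0..})" if "0 \<le> t" for t
    using mtrace_lindblad_has_vector_derivative[OF \<rho>[OF that], of "W l"] single[OF HW] others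
    by simp
  have "comm H (W l ** W l) = 0"
    using HW commute_square by (simp add: comm_eq_0_iff)
  then have "heisenberg H (\<lambda>k. U k ** W k) N (W l ** W l) = gen (U l ** W l) (W l ** W l)"
    by (rule single) (use others commute_square in blast)
  then show "((\<lambda>t. mtrace ((W l ** W l) ** \<rho> t)) has_vector_derivative
      mtrace ((W l ** gen (U l ** W l) (W l) + gen (U l ** W l) (W l) ** W l
        + diss (U l ** W l) (W l)) ** \<rho> t)) (at t within {0..})" if "0 \<le> t" for t
    using mtrace_lindblad_has_vector_derivative[OF \<rho>[OF that], of "W l ** W l"]
    by (simp add: gen_square)
qed

theorem corollary25:
  fixes H :: "'n::finite cmat"
    and W U :: "nat \<Rightarrow> 'n cmat"
    and N :: nat
  assumes H_sa: "self_adjoint H"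
    and W_psd: "\<And>l. l \<in> {1..N} \<Longrightarrow> psd (W l)"
    and W_ground: "\<And>l. l \<in> {1..N} \<Longrightarrow> smallest_eigenvalue (W l) = 0"
    and W_H: "\<And>l. l \<in> {1..N} \<Longrightarrow> comm H (W l) = 0"
    and W_W: "\<And>l l'. l \<in> {1..N} \<Longrightarrow> l' \<in> {1..N} \<Longrightarrow> l \<noteq> l' \<Longrightarrow> comm (W l) (W l') = 0"
    and U_unit: "\<And>k. k \<in> {1..N} \<Longrightarrow> unitary (U k)"
    and U_W: "\<And>k l. k \<in> {1..N} \<Longrightarrow> l \<in> {1..N} \<Longrightarrow> k \<noteq> l \<Longrightarrow> comm (U k) (W l) = 0"
    and cond: "\<And>l. l \<in> {1..N} \<Longrightarrow>
        (\<exists>c>0. loewner_le (gen (U l ** W l) (W l)) (- (complex_of_real c *\<^sub>m W l)))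
      \<or> (loewner_le (gen (U l ** W l) (W l)) 0 \<and>
         (\<exists>c>0. loewner_le (complex_of_real c *\<^sub>m W l) (diss (U l ** W l) (W l))))"
  shows "ags_stable H (\<lambda>k. U k ** W k) N (\<Sum>l\<in>{1..N}. W l)"
  unfolding ags_stable_def
proof (intro allI impI, elim conjE)
  fix \<rho> :: "real \<Rightarrow> 'n cmat"
  assume \<rho>0: "density_state (\<rho> 0)"
    and "\<forall>t\<ge>0. (\<rho> has_vector_derivative lindblad H (\<lambda>k. U k ** W k) N (\<rho> t)) (at t within {0..})"
  then have \<rho>: "(\<rho> has_vector_derivative lindblad H (\<lambda>k. U k ** W k) N (\<rho> t)) (at t within {0..})"
    if "0 \<le> t" for t
    using that by blast
  have dens: "density_state (\<rho> t)" if "0 \<le> t" for t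
    by (rule lindblad_density_state[OF H_sa \<rho> \<rho>0 that])
  have "((\<lambda>t. mtrace (W l ** \<rho> t)) \<longlongrightarrow> 0) at_top" if l: "l \<in> {1..N}" for l
    using U_unit W_psd U_W[OF _ l] W_W[OF _ l]
    by (intro mtrace_tendsto_0_commuting_channel[OF \<rho> dens l W_psd[OF l] W_H[OF l] _ cond[OF l]])
      (auto simp: comm_eq_0_iff psd_self_adjoint)
  then have lim: "((\<lambda>t. mtrace ((\<Sum>l\<in>{1..N}. W l) ** \<rho> t)) \<longlongrightarrow> 0) at_top"
    unfolding matrix_mul_sum_left mtrace_sum by (rule tendsto_null_sum)
  moreover have "smallest_eigenvalue (\<Sum>l\<in>{1..N}. W l) = 0"
    by (rule smallest_eigenvalue_eq_0_if_tendsto[OF psd_sum[OF W_psd] dens lim])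
  ultimately show "((\<lambda>t. mtrace ((\<Sum>l\<in>{1..N}. W l) ** \<rho> t))
      \<longlongrightarrow> complex_of_real (smallest_eigenvalue (\<Sum>l\<in>{1..N}. W l))) at_top"
    by simp
qed

end
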